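(* Let $p$ be an odd prime and let $\alpha,\beta,\gamma\in\mathbb{Z}_p$ with $p\nmid\beta$ and $p\nmid\gamma$, and with $(\alpha,\beta-\gamma)\ne(0,0)$. Let $k\ge0$ be the largest integer such that $p^k\mid\alpha$ and $p^k\mid(\beta-\gamma)$. Let $$f(x)=(x^2+p\alpha x+p\beta)(x^2-p\alpha x+p\gamma).$$ (Case 1) If $p^{k+1}\nmid(\beta-\gamma)$, then every monic quartic $g\in\mathbb{Z}_p[x]$ with $g\equiv f\pmod{p^{2k+4}}$ is reducible in $\mathbb{Z}_p[x]$. (Case 2) If $p^{k+1}\mid(\beta-\gamma)$ and $p^{k+1}\nmid\alpha$, then every monic quartic $g\in\mathbb{Z}_p[x]$ with $g\equiv f\pmod{p^{2k+5}}$ is reducible in $\mathbb{Z}_p[x]$.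
   Context: Congruences of polynomials are coefficientwise. Reducible means it can be written as a product of two nonconstant polynomials in $\mathbb{Z}_p[x]$. *)

theory Defs
  imports "HOL-Algebra.Algebra" "HOL-Computational_Algebra.Primes"
begin

text \<open>The ring of p-adic integers Z_p, realised as the inverse limit of the rings
  Z/p^n Z: an element is a compatible sequence x with x n in {0..<p^n} and
  x n = x (n+1) mod p^n.\<close>

definition padic_int :: "nat \<Rightarrow> (nat \<Rightarrow> int) ring" where
  "padic_int p =
    \<lparr>carrier = {x. \<forall>n. 0 \<le> x n \<and> x n < int p ^ n \<and> x n = x (Suc n) mod (int p ^ n)},
     monoid.mult = (\<lambda>x y n. (x n * y n) mod (int p ^ n)),
     monoid.one = (\<lambda>n. 1 mod (int p ^ n)),
     ring.zero = (\<lambda>n. 0),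
     ring.add = (\<lambda>x y n. (x n + y n) mod (int p ^ n))\<rparr>"

definition padic_p :: "nat \<Rightarrow> (nat \<Rightarrow> int)" where
  "padic_p p = add_pow (padic_int p) p \<one>\<^bsub>padic_int p\<^esub>"

definition padic_poly_reducible :: "nat \<Rightarrow> (nat \<Rightarrow> nat \<Rightarrow> int) \<Rightarrow> bool" where
  "padic_poly_reducible p g \<longleftrightarrow>
     (\<exists>a\<in>carrier (UP (padic_int p)). \<exists>b\<in>carrier (UP (padic_int p)).
        deg (padic_int p) a > 0 \<and> deg (padic_int p) b > 0 \<and> g = a \<otimes>\<^bsub>UP (padic_int p)\<^esub> b)"

definition padic_poly_cong :: "nat \<Rightarrow> nat \<Rightarrow> (nat \<Rightarrow> nat \<Rightarrow> int) \<Rightarrow> (nat \<Rightarrow> nat \<Rightarrow> int) \<Rightarrow> bool" where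
  "padic_poly_cong p m g f \<longleftrightarrow>
     (\<forall>i. (padic_p p [^]\<^bsub>padic_int p\<^esub> m) divides\<^bsub>padic_int p\<^esub>
          (coeff (UP (padic_int p)) g i \<ominus>\<^bsub>padic_int p\<^esub> coeff (UP (padic_int p)) f i))"

end

theory Submission
  imports Defs
begin

text \<open>
  Write \<open>f = q\<^sub>1 q\<^sub>2\<close> with \<open>q\<^sub>1 = x\<^sup>2 + p\<alpha> x + p\<beta>\<close> and \<open>q\<^sub>2 = x\<^sup>2 - p\<alpha> x + p\<gamma>\<close>. A monic quartic
  \<open>g\<close> close to \<open>f\<close> is shown to split into two monic quadratics by Newton's method for the map sending
  \<open>(a\<^sub>1, b\<^sub>1, a\<^sub>2, b\<^sub>2)\<close> to the coefficients of \<open>(x\<^sup>2 + a\<^sub>1 x + b\<^sub>1)(x\<^sup>2 + a\<^sub>2 x + b\<^sub>2)\<close>, whose Jacobian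
  determinant is the resultant of the two quadratics. Suppose \<open>p\<^sup>K\<close> divides \<open>a\<^sub>1 - a\<^sub>2\<close> and
  \<open>b\<^sub>1 - b\<^sub>2\<close>, the resultant has valuation \<open>K + m\<close>, and the coefficients of \<open>g\<close> are matched
  modulo \<open>p\<^sup>N\<close> with \<open>N \<ge> 2m + 1\<close>. Then a Newton step moves the four coefficients by multiples
  of \<open>p\<^sup>N\<^sup>-\<^sup>m\<close> and matches them modulo \<open>p\<^sup>N\<^sup>+\<^sup>1\<close>; the iterates stay within \<open>p\<^sup>m\<^sup>+\<^sup>1\<close> of the
  start, so the hypotheses persist and the iteration converges in \<open>\<int>\<^sub>p\<close>.

  For \<open>q\<^sub>1, q\<^sub>2\<close> we have \<open>K = k + 1\<close>, and the resultant is \<open>p\<^sup>2((\<beta> - \<gamma>)\<^sup>2 + 2p\<alpha>\<^sup>2(\<beta> + \<gamma>))\<close>. In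
  case 1 its valuation is \<open>2k + 2\<close>, so \<open>m = k + 1\<close>; in case 2 the term \<open>4p\<alpha>\<^sup>2\<beta>\<close> dominates
  (here \<open>p\<close> odd and \<open>p \<nmid> \<beta>\<close> are used), the valuation is \<open>2k + 3\<close> and \<open>m = k + 2\<close>. This gives the
  precisions \<open>2k + 4\<close> and \<open>2k + 5\<close>.
\<close>

section \<open>Products of two monic quadratics\<close>

definition (in ring) quad_prod_coeff :: "'a \<Rightarrow> 'a \<Rightarrow> 'a \<Rightarrow> 'a \<Rightarrow> nat \<Rightarrow> 'a" where
  "quad_prod_coeff a1 b1 a2 b2 i =
     (if i = 0 then b1 \<otimes> b2 else if i = 1 then a1 \<otimes> b2 \<oplus> a2 \<otimes> b1
      else if i = 2 then b1 \<oplus> b2 \<oplus> a1 \<otimes> a2 else if i = 3 then a1 \<oplus> a2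
      else if i = 4 then \<one> else \<zero>)"

lemma (in ring) quad_prod_coeff_closed [simp]:
  "a1 \<in> carrier R \<Longrightarrow> b1 \<in> carrier R \<Longrightarrow> a2 \<in> carrier R \<Longrightarrow> b2 \<in> carrier R \<Longrightarrow>
     quad_prod_coeff a1 b1 a2 b2 i \<in> carrier R"
  by (simp add: quad_prod_coeff_def)

text \<open>The resultant of \<open>x\<^sup>2 + a1 x + b1\<close> and \<open>x\<^sup>2 + a2 x + b2\<close>: up to sign, the Jacobian
  determinant of the map sending \<open>(a1, b1, a2, b2)\<close> to the coefficients of the product.\<close>

definition (in ring) quad_resultant :: "'a \<Rightarrow> 'a \<Rightarrow> 'a \<Rightarrow> 'a \<Rightarrow> 'a" where
  "quad_resultant a1 b1 a2 b2 =
     (b1 \<ominus> b2) \<otimes> (b1 \<ominus> b2) \<ominus> a1 \<otimes> (a1 \<ominus> a2) \<otimes> (b1 \<ominus> b2) \<oplus> b1 \<otimes> (a1 \<ominus> a2) \<otimes> (a1 \<ominus> a2)"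

lemma (in ring) quad_resultant_closed [simp]:
  "a1 \<in> carrier R \<Longrightarrow> b1 \<in> carrier R \<Longrightarrow> a2 \<in> carrier R \<Longrightarrow> b2 \<in> carrier R \<Longrightarrow>
     quad_resultant a1 b1 a2 b2 \<in> carrier R"
  by (simp add: quad_resultant_def)

lemma (in cring) cramer_2x2:
  assumes carrier: "m11 \<in> carrier R" "m12 \<in> carrier R" "m21 \<in> carrier R" "m22 \<in> carrier R"
      "r1 \<in> carrier R" "r2 \<in> carrier R" "x \<in> carrier R" "y \<in> carrier R"
    and d: "d = m11 \<otimes> m22 \<ominus> m12 \<otimes> m21"
    and x: "d \<otimes> x = m22 \<otimes> r1 \<ominus> m12 \<otimes> r2"
    and y: "d \<otimes> y = m11 \<otimes> r2 \<ominus> m21 \<otimes> r1"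
    and cancel: "\<And>z. z \<in> carrier R \<Longrightarrow> d \<otimes> z = \<zero> \<Longrightarrow> z = \<zero>"
  shows "m11 \<otimes> x \<oplus> m12 \<otimes> y = r1" "m21 \<otimes> x \<oplus> m22 \<otimes> y = r2"
proof -
  have "d \<otimes> (m11 \<otimes> x \<oplus> m12 \<otimes> y \<ominus> r1) = m11 \<otimes> (d \<otimes> x) \<oplus> m12 \<otimes> (d \<otimes> y) \<ominus> d \<otimes> r1"
    using carrier unfolding d by algebra
  also have "\<dots> = \<zero>"
    using carrier unfolding x y unfolding d by algebra
  finally have "m11 \<otimes> x \<oplus> m12 \<otimes> y \<ominus> r1 = \<zero>"
    using cancel[of "m11 \<otimes> x \<oplus> m12 \<otimes> y \<ominus> r1"] carrier by simp
  then show "m11 \<otimes> x \<oplus> m12 \<otimes> y = r1"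
    using carrier by (simp add: r_right_minus_eq)
  have "d \<otimes> (m21 \<otimes> x \<oplus> m22 \<otimes> y \<ominus> r2) = m21 \<otimes> (d \<otimes> x) \<oplus> m22 \<otimes> (d \<otimes> y) \<ominus> d \<otimes> r2"
    using carrier unfolding d by algebra
  also have "\<dots> = \<zero>"
    using carrier unfolding x y unfolding d by algebra
  finally have "m21 \<otimes> x \<oplus> m22 \<otimes> y \<ominus> r2 = \<zero>"
    using cancel[of "m21 \<otimes> x \<oplus> m22 \<otimes> y \<ominus> r2"] carrier by simp
  then show "m21 \<otimes> x \<oplus> m22 \<otimes> y = r2"
    using carrier by (simp add: r_right_minus_eq)
qed

lemma (in cring) quad_resultant_scaled_opposite:
  assumes "t \<in> carrier R" "a \<in> carrier R" "b \<in> carrier R" "c \<in> carrier R"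
  shows "quad_resultant (t \<otimes> a) (t \<otimes> b) (\<ominus> (t \<otimes> a)) (t \<otimes> c) =
    t \<otimes> t \<otimes> ((b \<ominus> c) \<otimes> (b \<ominus> c) \<oplus> (\<one> \<oplus> \<one>) \<otimes> t \<otimes> a \<otimes> a \<otimes> ((\<one> \<oplus> \<one>) \<otimes> b \<ominus> (b \<ominus> c)))"
proof -
  define two d where "two = \<one> \<oplus> \<one>" and "d = b \<ominus> c"
  have closed: "two \<in> carrier R" "d \<in> carrier R"
    using assms by (simp_all add: two_def d_def)
  have "t \<otimes> b \<ominus> t \<otimes> c = t \<otimes> d" "t \<otimes> a \<ominus> \<ominus> (t \<otimes> a) = t \<otimes> (two \<otimes> a)"
    using assms unfolding two_def d_def by algebra+
  then have "quad_resultant (t \<otimes> a) (t \<otimes> b) (\<ominus> (t \<otimes> a)) (t \<otimes> c) =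
      t \<otimes> d \<otimes> (t \<otimes> d) \<ominus> t \<otimes> a \<otimes> (t \<otimes> (two \<otimes> a)) \<otimes> (t \<otimes> d)
        \<oplus> t \<otimes> b \<otimes> (t \<otimes> (two \<otimes> a)) \<otimes> (t \<otimes> (two \<otimes> a))"
    unfolding quad_resultant_def by (simp only:)
  also have "\<dots> = t \<otimes> t \<otimes> (d \<otimes> d \<oplus> two \<otimes> t \<otimes> a \<otimes> a \<otimes> (two \<otimes> b \<ominus> d))"
    using assms closed by algebra
  finally show ?thesis
    unfolding two_def d_def .
qed

text \<open>One Newton step adds \<open>(s\<^sub>1, t\<^sub>1, s\<^sub>2, t\<^sub>2)\<close> to \<open>(a\<^sub>1, b\<^sub>1, a\<^sub>2, b\<^sub>2)\<close>. The errors \<open>e\<^sub>3\<close> and \<open>e\<^sub>2\<close> of the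
  two top coefficients determine \<open>s\<^sub>2\<close> and \<open>t\<^sub>2\<close>; the lower two coefficients then leave a linear
  system for \<open>s\<^sub>1, t\<^sub>1\<close> (the middle terms below) plus quadratic error terms.\<close>

lemma (in cring) newton_correction_coeffs:
  assumes carrier: "a1 \<in> carrier R" "b1 \<in> carrier R" "a2 \<in> carrier R" "b2 \<in> carrier R"
      "s1 \<in> carrier R" "t1 \<in> carrier R" "c0 \<in> carrier R" "c1 \<in> carrier R" "c2 \<in> carrier R" "c3 \<in> carrier R"
    and e0_def: "e0 = c0 \<ominus> b1 \<otimes> b2" and e1_def: "e1 = c1 \<ominus> (a1 \<otimes> b2 \<oplus> a2 \<otimes> b1)"
    and e2_def: "e2 = c2 \<ominus> (b1 \<oplus> b2 \<oplus> a1 \<otimes> a2)" and e3_def: "e3 = c3 \<ominus> (a1 \<oplus> a2)"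
    and D_def: "D = b1 \<ominus> b2" and E_def: "E = a1 \<ominus> a2"
    and s2_def: "s2 = e3 \<ominus> s1" and t2_def: "t2 = e2 \<ominus> a1 \<otimes> e3 \<oplus> E \<otimes> s1 \<ominus> t1"
  shows "c3 \<ominus> ((a1 \<oplus> s1) \<oplus> (a2 \<oplus> s2)) = \<zero>"
    and "c2 \<ominus> ((b1 \<oplus> t1) \<oplus> (b2 \<oplus> t2) \<oplus> (a1 \<oplus> s1) \<otimes> (a2 \<oplus> s2)) = \<ominus> (s1 \<otimes> s2)"
    and "c1 \<ominus> ((a1 \<oplus> s1) \<otimes> (b2 \<oplus> t2) \<oplus> (a2 \<oplus> s2) \<otimes> (b1 \<oplus> t1)) =
      (e1 \<ominus> b1 \<otimes> e3 \<ominus> a1 \<otimes> e2 \<oplus> a1 \<otimes> a1 \<otimes> e3) \<ominus> ((a1 \<otimes> E \<ominus> D) \<otimes> s1 \<oplus> \<ominus> E \<otimes> t1)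
        \<ominus> (s1 \<otimes> t2 \<oplus> s2 \<otimes> t1)"
    and "c0 \<ominus> (b1 \<oplus> t1) \<otimes> (b2 \<oplus> t2) =
      (e0 \<ominus> b1 \<otimes> e2 \<oplus> a1 \<otimes> b1 \<otimes> e3) \<ominus> (b1 \<otimes> E \<otimes> s1 \<oplus> \<ominus> D \<otimes> t1) \<ominus> t1 \<otimes> t2"
proof -
  have closed: "e0 \<in> carrier R" "e1 \<in> carrier R" "e2 \<in> carrier R" "e3 \<in> carrier R"
    "D \<in> carrier R" "E \<in> carrier R" "s2 \<in> carrier R" "t2 \<in> carrier R"
    using carrier by (simp_all add: e0_def e1_def e2_def e3_def D_def E_def s2_def t2_def)
  show "c3 \<ominus> ((a1 \<oplus> s1) \<oplus> (a2 \<oplus> s2)) = \<zero>"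
    using carrier unfolding s2_def e3_def by algebra
  show "c2 \<ominus> ((b1 \<oplus> t1) \<oplus> (b2 \<oplus> t2) \<oplus> (a1 \<oplus> s1) \<otimes> (a2 \<oplus> s2)) = \<ominus> (s1 \<otimes> s2)"
    using carrier unfolding s2_def t2_def e2_def e3_def E_def by algebra
  have "c1 \<ominus> ((a1 \<oplus> s1) \<otimes> (b2 \<oplus> t2) \<oplus> (a2 \<oplus> s2) \<otimes> (b1 \<oplus> t1)) =
      e1 \<ominus> (a1 \<otimes> t2 \<oplus> s1 \<otimes> b2 \<oplus> a2 \<otimes> t1 \<oplus> s2 \<otimes> b1) \<ominus> (s1 \<otimes> t2 \<oplus> s2 \<otimes> t1)"
    using carrier closed unfolding e1_def by algebra
  also have "e1 \<ominus> (a1 \<otimes> t2 \<oplus> s1 \<otimes> b2 \<oplus> a2 \<otimes> t1 \<oplus> s2 \<otimes> b1) =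
      (e1 \<ominus> b1 \<otimes> e3 \<ominus> a1 \<otimes> e2 \<oplus> a1 \<otimes> a1 \<otimes> e3) \<ominus> ((a1 \<otimes> E \<ominus> D) \<otimes> s1 \<oplus> \<ominus> E \<otimes> t1)"
    using carrier closed unfolding s2_def t2_def D_def E_def by algebra
  finally show "c1 \<ominus> ((a1 \<oplus> s1) \<otimes> (b2 \<oplus> t2) \<oplus> (a2 \<oplus> s2) \<otimes> (b1 \<oplus> t1)) =
      (e1 \<ominus> b1 \<otimes> e3 \<ominus> a1 \<otimes> e2 \<oplus> a1 \<otimes> a1 \<otimes> e3) \<ominus> ((a1 \<otimes> E \<ominus> D) \<otimes> s1 \<oplus> \<ominus> E \<otimes> t1)
        \<ominus> (s1 \<otimes> t2 \<oplus> s2 \<otimes> t1)" .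
  have "c0 \<ominus> (b1 \<oplus> t1) \<otimes> (b2 \<oplus> t2) = e0 \<ominus> (b1 \<otimes> t2 \<oplus> b2 \<otimes> t1) \<ominus> t1 \<otimes> t2"
    using carrier closed unfolding e0_def by algebra
  also have "e0 \<ominus> (b1 \<otimes> t2 \<oplus> b2 \<otimes> t1) = (e0 \<ominus> b1 \<otimes> e2 \<oplus> a1 \<otimes> b1 \<otimes> e3) \<ominus> (b1 \<otimes> E \<otimes> s1 \<oplus> \<ominus> D \<otimes> t1)"
    using carrier closed unfolding t2_def D_def E_def by algebra
  finally show "c0 \<ominus> (b1 \<oplus> t1) \<otimes> (b2 \<oplus> t2) =
      (e0 \<ominus> b1 \<otimes> e2 \<oplus> a1 \<otimes> b1 \<otimes> e3) \<ominus> (b1 \<otimes> E \<otimes> s1 \<oplus> \<ominus> D \<otimes> t1) \<ominus> t1 \<otimes> t2" .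
qed

definition monic_quad :: "('a, 'b) ring_scheme \<Rightarrow> 'a \<Rightarrow> 'a \<Rightarrow> nat \<Rightarrow> 'a" where
  "monic_quad R a b = monom (UP R) \<one>\<^bsub>R\<^esub> 2 \<oplus>\<^bsub>UP R\<^esub> monom (UP R) a 1 \<oplus>\<^bsub>UP R\<^esub> monom (UP R) b 0"

context UP_cring
begin

lemma monic_quad_closed: "a \<in> carrier R \<Longrightarrow> b \<in> carrier R \<Longrightarrow> monic_quad R a b \<in> carrier P"
  unfolding monic_quad_def P_def[symmetric] by simp

lemma coeff_monic_quad:
  "a \<in> carrier R \<Longrightarrow> b \<in> carrier R \<Longrightarrow> up_ring.coeff P (monic_quad R a b) n =
     (if n = 0 then b else if n = 1 then a else if n = 2 then \<one> else \<zero>)"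
  unfolding monic_quad_def P_def[symmetric] by auto

lemma coeff_monic_quad_mult:
  assumes "a1 \<in> carrier R" "b1 \<in> carrier R" "a2 \<in> carrier R" "b2 \<in> carrier R"
  shows "up_ring.coeff P (monic_quad R a1 b1 \<otimes>\<^bsub>P\<^esub> monic_quad R a2 b2) n = R.quad_prod_coeff a1 b1 a2 b2 n"
proof -
  let ?c1 = "up_ring.coeff P (monic_quad R a1 b1)" and ?c2 = "up_ring.coeff P (monic_quad R a2 b2)"
  have "up_ring.coeff P (monic_quad R a1 b1 \<otimes>\<^bsub>P\<^esub> monic_quad R a2 b2) n = (\<Oplus>i\<in>{..n}. ?c1 i \<otimes> ?c2 (n - i))"
    using assms by (simp add: monic_quad_closed)
  also have "\<dots> = (\<Oplus>i\<in>{..n}. if i \<le> 2 \<and> n - i \<le> 2 then ?c1 i \<otimes> ?c2 (n - i) else \<zero>)"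
    using assms by (intro R.finsum_cong') (auto simp: coeff_monic_quad)
  also have "\<dots> = R.quad_prod_coeff a1 b1 a2 b2 n"
  proof (cases "n \<le> 4")
    case True
    then have "n = 0 \<or> n = 1 \<or> n = 2 \<or> n = 3 \<or> n = 4" by auto
    then show ?thesis
      using assms
      by (elim disjE) (simp_all add: R.quad_prod_coeff_def coeff_monic_quad R.finsum_Suc eval_nat_numeral
          R.m_comm R.a_ac)
  next
    case False
    then show ?thesis
      by (simp add: R.quad_prod_coeff_def, intro R.add.finprod_one_eqI) auto
  qed
  finally show ?thesis .
qed

lemma deg_monic_quad:
  assumes "a \<in> carrier R" "b \<in> carrier R" "\<one> \<noteq> \<zero>"
  shows "deg R (monic_quad R a b) = 2"
  using assms
  by (intro le_antisym deg_aboveI deg_belowI) (auto simp: coeff_monic_quad monic_quad_closed)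

lemma monom_one_squared: "up_ring.monom P \<one> 1 [^]\<^bsub>P\<^esub> (2::nat) = up_ring.monom P \<one> 2"
  using monom_mult[of \<one> \<one> 1 1] by (simp add: numeral_2_eq_2)

lemma monic_quad_eq_plus:
  "c \<in> carrier R \<Longrightarrow> d \<in> carrier R \<Longrightarrow>
     up_ring.monom P \<one> 1 [^]\<^bsub>P\<^esub> (2::nat) \<oplus>\<^bsub>P\<^esub> up_ring.monom P c 1 \<oplus>\<^bsub>P\<^esub> up_ring.monom P d 0 = monic_quad R c d"
  unfolding monom_one_squared monic_quad_def P_def[symmetric] by simp

lemma monic_quad_eq_minus:
  "c \<in> carrier R \<Longrightarrow> d \<in> carrier R \<Longrightarrow>
     up_ring.monom P \<one> 1 [^]\<^bsub>P\<^esub> (2::nat) \<ominus>\<^bsub>P\<^esub> up_ring.monom P c 1 \<oplus>\<^bsub>P\<^esub> up_ring.monom P d 0 = monic_quad R (\<ominus> c) d"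
  unfolding monom_one_squared monic_quad_def P_def[symmetric] a_minus_def by (simp add: monom_a_inv)

lemma monic_quartic_eq_monic_quad_mult:
  assumes g: "g \<in> carrier P" "deg R g = 4" "up_ring.coeff P g 4 = \<one>"
    and ab: "a1 \<in> carrier R" "b1 \<in> carrier R" "a2 \<in> carrier R" "b2 \<in> carrier R"
    and low: "\<And>i. i < 4 \<Longrightarrow> up_ring.coeff P g i = R.quad_prod_coeff a1 b1 a2 b2 i"
  shows "g = monic_quad R a1 b1 \<otimes>\<^bsub>P\<^esub> monic_quad R a2 b2"
proof (rule up_eqI)
  fix n
  have "up_ring.coeff P g n = R.quad_prod_coeff a1 b1 a2 b2 n"
  proof (cases "n < 4")
    case False
    then show ?thesis
      using g deg_aboveD[of g n] by (cases "n = 4") (simp_all add: R.quad_prod_coeff_def)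
  qed (fact low)
  then show "up_ring.coeff P g n = up_ring.coeff P (monic_quad R a1 b1 \<otimes>\<^bsub>P\<^esub> monic_quad R a2 b2) n"
    using ab by (simp add: coeff_monic_quad_mult)
qed (use g ab in \<open>simp_all add: monic_quad_closed\<close>)

end

section \<open>The ring of \<open>p\<close>-adic integers\<close>

lemma padic_int_carrier_iff:
  "x \<in> carrier (padic_int p) \<longleftrightarrow> (\<forall>n. 0 \<le> x n \<and> x n < int p ^ n \<and> x n = x (Suc n) mod int p ^ n)"
  by (simp add: padic_int_def)

lemma padic_int_add: "x \<oplus>\<^bsub>padic_int p\<^esub> y = (\<lambda>n. (x n + y n) mod int p ^ n)"
  by (simp add: padic_int_def)

lemma padic_int_mult: "x \<otimes>\<^bsub>padic_int p\<^esub> y = (\<lambda>n. (x n * y n) mod int p ^ n)"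
  by (simp add: padic_int_def)

lemma padic_int_one: "\<one>\<^bsub>padic_int p\<^esub> = (\<lambda>n. 1 mod int p ^ n)"
  by (simp add: padic_int_def)

lemma padic_int_zero: "\<zero>\<^bsub>padic_int p\<^esub> = (\<lambda>n. 0)"
  by (simp add: padic_int_def)

lemma mod_power_Suc_mod: "(a::int) mod q ^ Suc n mod q ^ n = a mod q ^ n"
  by (rule mod_mod_cancel) (simp add: le_imp_power_dvd)

lemma padic_int_component_mod:
  assumes "x \<in> carrier (padic_int p)" "m \<le> n"
  shows "x m = x n mod int p ^ m"
  using assms(2)
proof (induction n rule: dec_induct)
  case base
  have "0 \<le> x m" "x m < int p ^ m"
    using assms(1) unfolding padic_int_carrier_iff by blast+
  then show ?case by simp
next
  case (step n)
  have "x n = x (Suc n) mod int p ^ n"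
    using assms(1) unfolding padic_int_carrier_iff by blast
  then have "x m = x (Suc n) mod int p ^ n mod int p ^ m"
    using step.IH by simp
  also have "\<dots> = x (Suc n) mod int p ^ m"
    using step.hyps by (simp add: mod_mod_cancel le_imp_power_dvd)
  finally show ?case .
qed

lemma padic_int_reduce_closed:
  assumes "p \<ge> 1" and "\<And>n. h n mod int p ^ n = h (Suc n) mod int p ^ n"
  shows "(\<lambda>n. h n mod int p ^ n) \<in> carrier (padic_int p)"
  unfolding padic_int_carrier_iff
proof (intro allI conjI)
  fix n
  have "int p ^ n > 0" using assms(1) by simp
  then show "0 \<le> h n mod int p ^ n" "h n mod int p ^ n < int p ^ n" by simp_all
  show "h n mod int p ^ n = h (Suc n) mod int p ^ Suc n mod int p ^ n"
    unfolding mod_power_Suc_mod by (fact assms(2))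
qed

lemma padic_int_cring:
  assumes "p \<ge> 1"
  shows "cring (padic_int p)"
proof -
  have reduced: "x n mod int p ^ n = x n" and compatible: "x n mod int p ^ n = x (Suc n) mod int p ^ n"
    if "x \<in> carrier (padic_int p)" for x n
  proof -
    have "0 \<le> x n" "x n < int p ^ n" "x n = x (Suc n) mod int p ^ n"
      using that unfolding padic_int_carrier_iff by blast+
    then show "x n mod int p ^ n = x n" "x n mod int p ^ n = x (Suc n) mod int p ^ n"
      by simp_all
  qed
  have add_closed: "x \<oplus>\<^bsub>padic_int p\<^esub> y \<in> carrier (padic_int p)"
    and mult_closed: "x \<otimes>\<^bsub>padic_int p\<^esub> y \<in> carrier (padic_int p)"
    and neg_closed: "(\<lambda>n. (- x n) mod int p ^ n) \<in> carrier (padic_int p)"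
    if "x \<in> carrier (padic_int p)" "y \<in> carrier (padic_int p)" for x y
    unfolding padic_int_add padic_int_mult using assms compatible[OF that(1)] compatible[OF that(2)]
    by (auto intro!: padic_int_reduce_closed mod_add_cong mod_mult_cong mod_minus_cong)
  show ?thesis
  proof (rule cringI)
    show "abelian_group (padic_int p)"
    proof (rule abelian_groupI)
      fix x y z
      assume x: "x \<in> carrier (padic_int p)"
      show "\<zero>\<^bsub>padic_int p\<^esub> \<oplus>\<^bsub>padic_int p\<^esub> x = x"
        using reduced[OF x] by (simp add: padic_int_add padic_int_zero)
      show "\<exists>y\<in>carrier (padic_int p). y \<oplus>\<^bsub>padic_int p\<^esub> x = \<zero>\<^bsub>padic_int p\<^esub>"
        using neg_closed[OF x x] by (intro bexI) (auto simp: padic_int_add padic_int_zero mod_add_left_eq)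
      show "(x \<oplus>\<^bsub>padic_int p\<^esub> y) \<oplus>\<^bsub>padic_int p\<^esub> z = x \<oplus>\<^bsub>padic_int p\<^esub> (y \<oplus>\<^bsub>padic_int p\<^esub> z)"
        by (simp add: padic_int_add mod_add_left_eq mod_add_right_eq add.assoc)
      show "x \<oplus>\<^bsub>padic_int p\<^esub> y = y \<oplus>\<^bsub>padic_int p\<^esub> x"
        by (simp add: padic_int_add add.commute)
    next
      show "\<zero>\<^bsub>padic_int p\<^esub> \<in> carrier (padic_int p)"
        using assms unfolding padic_int_carrier_iff padic_int_zero by simp
    qed (fact add_closed)
  next
    show "comm_monoid (padic_int p)"
    proof (rule comm_monoidI)
      fix x y z
      assume x: "x \<in> carrier (padic_int p)"
      show "\<one>\<^bsub>padic_int p\<^esub> \<otimes>\<^bsub>padic_int p\<^esub> x = x"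
        using reduced[OF x] by (simp add: padic_int_mult padic_int_one mod_mult_left_eq)
      show "(x \<otimes>\<^bsub>padic_int p\<^esub> y) \<otimes>\<^bsub>padic_int p\<^esub> z = x \<otimes>\<^bsub>padic_int p\<^esub> (y \<otimes>\<^bsub>padic_int p\<^esub> z)"
        by (simp add: padic_int_mult mod_mult_left_eq mod_mult_right_eq mult.assoc)
      show "x \<otimes>\<^bsub>padic_int p\<^esub> y = y \<otimes>\<^bsub>padic_int p\<^esub> x"
        by (simp add: padic_int_mult mult.commute)
    next
      show "\<one>\<^bsub>padic_int p\<^esub> \<in> carrier (padic_int p)"
        unfolding padic_int_one using assms by (intro padic_int_reduce_closed) (simp_all add: mod_power_Suc_mod)
    qed (fact mult_closed)
  next
    fix x y z
    show "(x \<oplus>\<^bsub>padic_int p\<^esub> y) \<otimes>\<^bsub>padic_int p\<^esub> z =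
        x \<otimes>\<^bsub>padic_int p\<^esub> z \<oplus>\<^bsub>padic_int p\<^esub> y \<otimes>\<^bsub>padic_int p\<^esub> z"
      unfolding padic_int_mult padic_int_add
      by (rule ext) (simp add: mod_add_eq mod_mult_left_eq mod_mult_right_eq distrib_right)
  qed
qed

locale padic_integers =
  fixes p :: nat and Z (structure)
  defines Z_def: "Z \<equiv> padic_int p"
  assumes prime_p: "Factorial_Ring.prime p"
begin

abbreviation \<pi> :: "nat \<Rightarrow> int" where "\<pi> \<equiv> padic_p p"

lemma p_ge_2: "p \<ge> 2"
  using prime_p by (simp add: prime_ge_2_nat)

lemma p_power_pos: "int p ^ n > 0"
  using p_ge_2 by simp

sublocale cring Z
  unfolding Z_def using padic_int_cring p_ge_2 by simp

lemma add_apply: "(x \<oplus> y) n = (x n + y n) mod int p ^ n"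
  unfolding Z_def padic_int_add by simp

lemma mult_apply: "(x \<otimes> y) n = (x n * y n) mod int p ^ n"
  unfolding Z_def padic_int_mult by simp

lemma one_apply: "\<one> n = 1 mod int p ^ n"
  unfolding Z_def padic_int_one by simp

lemma zero_apply: "\<zero> n = 0"
  unfolding Z_def padic_int_zero by simp

lemma component_range: "x \<in> carrier Z \<Longrightarrow> 0 \<le> x n \<and> x n < int p ^ n"
  unfolding Z_def padic_int_carrier_iff by blast

lemma component_mod_self: "x \<in> carrier Z \<Longrightarrow> x n mod int p ^ n = x n"
  using component_range[of x n] by simp

lemma component_mod: "x \<in> carrier Z \<Longrightarrow> m \<le> n \<Longrightarrow> x m = x n mod int p ^ m"
  unfolding Z_def by (rule padic_int_component_mod)

lemma uminus_apply:
  assumes "x \<in> carrier Z"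
  shows "(\<ominus> x) n = (- x n) mod int p ^ n"
proof -
  have "(\<lambda>n. (- x n) mod int p ^ n) \<in> carrier Z"
    unfolding Z_def using p_ge_2
  proof (intro padic_int_reduce_closed)
    show "- x n mod int p ^ n = - x (Suc n) mod int p ^ n" for n
      using component_mod[OF assms, of n "Suc n"] by (simp add: mod_minus_eq)
  qed simp
  then have "\<ominus> x = (\<lambda>n. (- x n) mod int p ^ n)"
    using assms by (intro minus_equality) (auto simp: add_apply zero_apply mod_add_left_eq)
  then show ?thesis by simp
qed

lemma minus_apply:
  "x \<in> carrier Z \<Longrightarrow> y \<in> carrier Z \<Longrightarrow> (x \<ominus> y) n = (x n - y n) mod int p ^ n"
  unfolding a_minus_def by (simp add: add_apply uminus_apply mod_add_right_eq)

lemma one_neq_zero: "\<one> \<noteq> \<zero>"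
proof
  assume "\<one> = \<zero>"
  then have "\<one> 1 = \<zero> 1" by simp
  then show False
    using p_ge_2 by (simp add: one_apply zero_apply)
qed

lemma UP_cring_Z: "UP_cring Z"
  by (simp add: UP_cring_def is_cring)

lemma pi_eq: "\<pi> = [p] \<cdot> \<one>"
  unfolding padic_p_def Z_def by simp

lemma pi_closed [simp]: "\<pi> \<in> carrier Z"
  unfolding pi_eq by simp

lemma pi_pow_closed [simp]: "\<pi> [^] (n::nat) \<in> carrier Z"
  by simp

lemma pi_apply: "\<pi> n = int p mod int p ^ n"
proof -
  have "([k] \<cdot> \<one>) n = int k mod int p ^ n" for k
    by (induction k) (simp_all add: zero_apply add_apply one_apply mod_add_eq add.nat_pow_Suc add.commute)
  then show ?thesis unfolding pi_eq .
qed

lemma nat_pow_apply: "x \<in> carrier Z \<Longrightarrow> (x [^] (k::nat)) n = x n ^ k mod int p ^ n"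
  by (induction k) (simp_all add: one_apply mult_apply mod_mult_left_eq mod_mult_right_eq mult.commute)

lemma pi_pow_apply: "(\<pi> [^] (k::nat)) n = int p ^ k mod int p ^ n"
  by (simp add: nat_pow_apply pi_apply power_mod)

text \<open>For \<open>z\<close> in the carrier, \<open>pdvd n z\<close> says \<open>p\<^sup>n\<close> divides \<open>z\<close> (\<open>pi_pow_divides_iff\<close>).\<close>

definition pdvd :: "nat \<Rightarrow> (nat \<Rightarrow> int) \<Rightarrow> bool"
  where "pdvd n z \<longleftrightarrow> z n = 0"

lemma pdvd_zero [simp]: "pdvd n \<zero>"
  by (simp add: pdvd_def zero_apply)

lemma pdvd_add: "pdvd n x \<Longrightarrow> pdvd n y \<Longrightarrow> pdvd n (x \<oplus> y)"
  by (simp add: pdvd_def add_apply)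

lemma pdvd_uminus: "x \<in> carrier Z \<Longrightarrow> pdvd n x \<Longrightarrow> pdvd n (\<ominus> x)"
  by (simp add: pdvd_def uminus_apply)

lemma pdvd_minus:
  "x \<in> carrier Z \<Longrightarrow> y \<in> carrier Z \<Longrightarrow> pdvd n x \<Longrightarrow> pdvd n y \<Longrightarrow> pdvd n (x \<ominus> y)"
  by (simp add: pdvd_def minus_apply)

lemma pdvd_mult_left: "pdvd n x \<Longrightarrow> pdvd n (x \<otimes> y)"
  by (simp add: pdvd_def mult_apply)

lemma pdvd_mult_right: "pdvd n y \<Longrightarrow> pdvd n (x \<otimes> y)"
  by (simp add: pdvd_def mult_apply)

lemma pdvd_iff_dvd_component:
  "x \<in> carrier Z \<Longrightarrow> m \<le> n \<Longrightarrow> pdvd m x \<longleftrightarrow> int p ^ m dvd x n"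
  using component_mod[of x m n] by (simp add: pdvd_def dvd_eq_mod_eq_0)

lemma pdvd_mono: "x \<in> carrier Z \<Longrightarrow> m \<le> n \<Longrightarrow> pdvd n x \<Longrightarrow> pdvd m x"
  by (metis pdvd_iff_dvd_component le_imp_power_dvd dvd_trans order_refl)

lemma pdvd_mult:
  assumes "x \<in> carrier Z" "y \<in> carrier Z" "pdvd a x" "pdvd b y" "c \<le> a + b"
  shows "pdvd c (x \<otimes> y)"
proof -
  have "int p ^ a dvd x (a + b)" "int p ^ b dvd y (a + b)"
    using assms pdvd_iff_dvd_component[of x a "a + b"] pdvd_iff_dvd_component[of y b "a + b"]
    by simp_all
  then have "int p ^ (a + b) dvd x (a + b) * y (a + b)"
    by (simp add: power_add mult_dvd_mono)
  then have "pdvd (a + b) (x \<otimes> y)"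
    by (simp add: pdvd_def mult_apply)
  with assms show ?thesis
    by (intro pdvd_mono[of _ c "a + b"]) simp_all
qed

lemma pdvd_pi_pow_mult: "pdvd k (\<pi> [^] k \<otimes> y)"
  by (simp add: pdvd_def mult_apply pi_pow_apply)

lemma pdvd_one_pi: "pdvd 1 \<pi>"
  by (simp add: pdvd_def pi_apply)

lemma pdvd_imp_pi_pow_factor:
  assumes z: "z \<in> carrier Z" and "pdvd n z"
  shows "\<exists>y\<in>carrier Z. z = \<pi> [^] n \<otimes> y"
proof -
  define q where "q = int p ^ n"
  have q_pos: "q > 0" using p_power_pos q_def by simp
  have "q dvd z (i + n)" for i
    using pdvd_iff_dvd_component[OF z, of n "i + n"] assms(2) q_def by simp
  then have z_eq: "z (i + n) = q * (z (i + n) div q)" for i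
    by simp
  define y where "y i = z (i + n) div q" for i
  have "y \<in> carrier Z"
    unfolding Z_def padic_int_carrier_iff
  proof (intro allI conjI)
    fix i
    have range: "0 \<le> z (i + n)" "z (i + n) < int p ^ (i + n)"
      using component_range[OF z] by auto
    show "0 \<le> y i"
      unfolding y_def using range q_pos by (simp add: pos_imp_zdiv_nonneg_iff)
    have "q * y i < q * int p ^ i"
      using range z_eq[of i] by (simp add: y_def q_def power_add mult.commute)
    then show "y i < int p ^ i"
      using q_pos by simp
    have "z (i + n) = z (Suc i + n) mod (q * int p ^ i)"
      using component_mod[OF z, of "i + n" "Suc i + n"] by (simp add: q_def power_add mult.commute)
    then have "q * y i = q * (y (Suc i) mod int p ^ i)"
      using z_eq[of i] z_eq[of "Suc i"] by (simp add: y_def mult_mod_right)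
    then show "y i = y (Suc i) mod int p ^ i"
      using q_pos by simp
  qed
  moreover have "z = \<pi> [^] n \<otimes> y"
  proof
    fix i
    have "(\<pi> [^] n \<otimes> y) i = (q * y i) mod int p ^ i"
      by (simp add: mult_apply pi_pow_apply mod_mult_left_eq q_def)
    also have "\<dots> = z i"
      using z_eq[of i] component_mod[OF z, of i "i + n"] by (simp add: y_def)
    finally show "z i = (\<pi> [^] n \<otimes> y) i" ..
  qed
  ultimately show ?thesis by blast
qed

lemma pi_pow_divides_iff: "z \<in> carrier Z \<Longrightarrow> \<pi> [^] (n::nat) divides z \<longleftrightarrow> pdvd n z"
  unfolding factor_def using pdvd_imp_pi_pow_factor pdvd_pi_pow_mult by blast

lemma eq_zero_if_pdvd_all: "(\<And>n. pdvd n z) \<Longrightarrow> z = \<zero>"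
  by (rule ext) (simp add: pdvd_def zero_apply)

lemma component_eq_if_pdvd_minus:
  assumes "x \<in> carrier Z" "y \<in> carrier Z" "pdvd n (x \<ominus> y)" "k \<le> n"
  shows "x k = y k"
proof -
  have "(x n - y n) mod int p ^ n = 0"
    using assms by (simp add: pdvd_def minus_apply)
  then have "x n = y n"
    using component_mod_self[OF assms(1)] component_mod_self[OF assms(2)]
    by (metis mod_eq_dvd_iff dvd_eq_mod_eq_0)
  then show ?thesis
    using component_mod[OF assms(1,4)] component_mod[OF assms(2,4)] by simp
qed

lemma pi_pow_mult_eq_zero:
  assumes x: "x \<in> carrier Z" and "\<pi> [^] (k::nat) \<otimes> x = \<zero>"
  shows "x = \<zero>"
proof (rule eq_zero_if_pdvd_all)
  fix j
  have "(int p ^ k * x (j + k)) mod int p ^ (j + k) = 0"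
    using fun_cong[OF assms(2), of "j + k"]
    by (simp add: mult_apply pi_pow_apply zero_apply mod_mult_left_eq)
  then have "int p ^ k * int p ^ j dvd int p ^ k * x (j + k)"
    by (simp add: dvd_eq_mod_eq_0 power_add mult.commute)
  then have "int p ^ j dvd x (j + k)"
    using p_ge_2 by simp
  then show "pdvd j x"
    using pdvd_iff_dvd_component[OF x, of j "j + k"] by simp
qed

text \<open>The component \<open>x 1\<close> is the residue of \<open>x\<close> modulo \<open>p\<close>; \<open>x\<close> is a unit iff it is nonzero.\<close>

lemma residue_nonzero_iff_not_pi_divides: "x \<in> carrier Z \<Longrightarrow> x 1 \<noteq> 0 \<longleftrightarrow> \<not> \<pi> divides x"
  using pi_pow_divides_iff[of x 1] by (simp add: pdvd_def)

lemma residue_nonzero_if_not_pi_pow_Suc_divides: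
  assumes u: "u \<in> carrier Z" and "\<not> \<pi> [^] Suc k divides (\<pi> [^] k \<otimes> u)"
  shows "u 1 \<noteq> 0"
proof
  assume "u 1 = 0"
  then obtain u' where u': "u' \<in> carrier Z" "u = \<pi> \<otimes> u'"
    using u residue_nonzero_iff_not_pi_divides unfolding factor_def by blast
  then have "\<pi> [^] k \<otimes> u = \<pi> [^] Suc k \<otimes> u'"
    by (simp add: m_assoc)
  with u' assms(2) show False
    unfolding factor_def by blast
qed

lemma residue_mult_nonzero:
  assumes "x \<in> carrier Z" "y \<in> carrier Z" "x 1 \<noteq> 0" "y 1 \<noteq> 0"
  shows "(x \<otimes> y) 1 \<noteq> 0"
proof -
  have "\<not> int p dvd x 1" "\<not> int p dvd y 1"
    using assms component_range[of x 1] component_range[of y 1] by (auto simp: zdvd_not_zless)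
  then have "\<not> int p dvd x 1 * y 1"
    using prime_p by (simp add: prime_dvd_mult_iff)
  then show ?thesis
    by (simp add: mult_apply dvd_eq_mod_eq_0)
qed

lemma residue_add_pi_mult: "x \<in> carrier Z \<Longrightarrow> (x \<oplus> \<pi> \<otimes> y) 1 = x 1"
  using component_mod_self[of x 1] by (simp add: add_apply mult_apply pi_apply)

lemma residue_two_nonzero:
  assumes "odd p"
  shows "(\<one> \<oplus> \<one>) 1 \<noteq> 0"
proof -
  have "p \<noteq> 2"
    using assms by auto
  then have "int p > 2"
    using p_ge_2 by simp
  then show ?thesis
    by (simp add: add_apply one_apply)
qed

lemma inverse_exists_if_residue_nonzero:
  assumes x: "x \<in> carrier Z" and "x 1 \<noteq> 0"
  shows "\<exists>y\<in>carrier Z. x \<otimes> y = \<one>"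
proof -
  let ?inverse = "\<lambda>n u. (x n * u) mod int p ^ n = 1 mod int p ^ n"
  have "coprime (x n) (int p ^ n)" for n
  proof (cases "n = 0")
    case False
    then have "\<not> int p dvd x n"
      using assms component_mod[OF x, of 1 n] by (auto simp: dvd_eq_mod_eq_0)
    then show ?thesis
      using prime_p by (simp add: prime_imp_coprime coprime_commute)
  qed simp
  then have exists: "\<exists>u. ?inverse n u" for n
    by (metis bezout_int gcd.commute coprime_iff_gcd_eq_1 mod_mult_self4 mult.commute)
  have unique: "a = b" if "?inverse n a" "?inverse n b"
    "0 \<le> a" "a < int p ^ n" "0 \<le> b" "b < int p ^ n" for n a b
  proof -
    have "(b * (x n * a)) mod int p ^ n = b mod int p ^ n"
      "(a * (x n * b)) mod int p ^ n = a mod int p ^ n"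
      using that(1,2) by (metis mod_mult_right_eq mult.right_neutral)+
    then have "a mod int p ^ n = b mod int p ^ n"
      by (simp add: algebra_simps)
    then show ?thesis
      using that by simp
  qed
  define y where "y n = (SOME u. ?inverse n u) mod int p ^ n" for n
  have y_inverse: "?inverse n (y n)" for n
    using someI_ex[OF exists[of n]] by (simp add: y_def mod_mult_right_eq)
  have y_range: "0 \<le> y n" "y n < int p ^ n" for n
    using p_power_pos[of n] by (simp_all add: y_def)
  have "y \<in> carrier Z"
    unfolding Z_def padic_int_carrier_iff
  proof (intro allI conjI)
    fix n
    show "0 \<le> y n" "y n < int p ^ n" by (fact y_range)+
    have "(x (Suc n) * y (Suc n)) mod int p ^ n = 1 mod int p ^ n"
      using y_inverse[of "Suc n"] mod_power_Suc_mod by metis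
    then have "?inverse n (y (Suc n) mod int p ^ n)"
      using component_mod[OF x, of n "Suc n"] by (simp add: mod_mult_left_eq mod_mult_right_eq)
    then show "y n = y (Suc n) mod int p ^ n"
      using unique[OF y_inverse[of n]] y_range[of n] p_power_pos[of n] by simp
  qed
  moreover have "x \<otimes> y = \<one>"
    by (rule ext) (simp add: mult_apply one_apply y_inverse)
  ultimately show ?thesis by blast
qed

lemma pi_pow_unit_mult_eq_zero:
  assumes "w \<in> carrier Z" "w 1 \<noteq> 0" "z \<in> carrier Z" "\<pi> [^] (n::nat) \<otimes> w \<otimes> z = \<zero>"
  shows "z = \<zero>"
proof -
  obtain w' where w': "w' \<in> carrier Z" "w \<otimes> w' = \<one>"
    using inverse_exists_if_residue_nonzero assms(1,2) by blast
  have "w \<otimes> z = \<zero>"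
    using pi_pow_mult_eq_zero[of "w \<otimes> z" n] assms by (simp add: m_assoc)
  moreover have "(w \<otimes> w') \<otimes> z = w' \<otimes> (w \<otimes> z)"
    using assms w'(1) by algebra
  ultimately show ?thesis
    using assms w' by simp
qed

section \<open>Lifting a factorisation into two quadratics\<close>

definition approx_quad_factor ::
    "nat \<Rightarrow> (nat \<Rightarrow> nat \<Rightarrow> int) \<Rightarrow> (nat \<Rightarrow> int) \<Rightarrow> (nat \<Rightarrow> int) \<Rightarrow> (nat \<Rightarrow> int) \<Rightarrow> (nat \<Rightarrow> int) \<Rightarrow> bool"
  where "approx_quad_factor N c a1 b1 a2 b2 \<longleftrightarrow> (\<forall>i<4. pdvd N (c i \<ominus> quad_prod_coeff a1 b1 a2 b2 i))"

lemma approx_quad_factor_iff: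
  "approx_quad_factor N c a1 b1 a2 b2 \<longleftrightarrow>
     pdvd N (c 0 \<ominus> b1 \<otimes> b2) \<and> pdvd N (c 1 \<ominus> (a1 \<otimes> b2 \<oplus> a2 \<otimes> b1)) \<and>
     pdvd N (c 2 \<ominus> (b1 \<oplus> b2 \<oplus> a1 \<otimes> a2)) \<and> pdvd N (c 3 \<ominus> (a1 \<oplus> a2))"
  (is "_ \<longleftrightarrow> ?coeffs")
  unfolding approx_quad_factor_def
proof
  assume "\<forall>i<4. pdvd N (c i \<ominus> quad_prod_coeff a1 b1 a2 b2 i)"
  from this[rule_format, of 0] this[rule_format, of 1] this[rule_format, of 2] this[rule_format, of 3]
  show ?coeffs
    by (simp add: quad_prod_coeff_def)
next
  assume ?coeffs
  show "\<forall>i<4. pdvd N (c i \<ominus> quad_prod_coeff a1 b1 a2 b2 i)"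
  proof (intro allI impI)
    fix i :: nat
    assume "i < 4"
    then have "i = 0 \<or> i = 1 \<or> i = 2 \<or> i = 3" by auto
    with \<open>?coeffs\<close> show "pdvd N (c i \<ominus> quad_prod_coeff a1 b1 a2 b2 i)"
      by (auto simp: quad_prod_coeff_def)
  qed
qed

text \<open>Cramer's rule for that system, whose determinant is the resultant: as \<open>D, E\<close> carry the
  factor \<open>\<pi>\<^sup>K\<close>, dividing by the resultant \<open>\<pi>\<^sup>K\<^sup>+\<^sup>m w\<close> loses only \<open>m\<close> digits.\<close>

lemma newton_linear_solve:
  assumes carrier: "a1 \<in> carrier Z" "b1 \<in> carrier Z" "D' \<in> carrier Z" "E' \<in> carrier Z"
      "r1 \<in> carrier Z" "r0 \<in> carrier Z" "w \<in> carrier Z"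
    and D: "D = \<pi> [^] K \<otimes> D'" and E: "E = \<pi> [^] K \<otimes> E'"
    and res: "D \<otimes> D \<ominus> a1 \<otimes> E \<otimes> D \<oplus> b1 \<otimes> E \<otimes> E = \<pi> [^] (K + m) \<otimes> w"
    and unit: "w 1 \<noteq> 0" and r: "pdvd N r1" "pdvd N r0" and "m \<le> N"
  shows "\<exists>s\<in>carrier Z. \<exists>t\<in>carrier Z. pdvd (N - m) s \<and> pdvd (N - m) t \<and>
           (a1 \<otimes> E \<ominus> D) \<otimes> s \<oplus> \<ominus> E \<otimes> t = r1 \<and> b1 \<otimes> E \<otimes> s \<oplus> \<ominus> D \<otimes> t = r0"
proof -
  obtain r1' r0' where r': "r1' \<in> carrier Z" "r1 = \<pi> [^] N \<otimes> r1'" "r0' \<in> carrier Z" "r0 = \<pi> [^] N \<otimes> r0'"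
    using pdvd_imp_pi_pow_factor carrier(5,6) r by metis
  obtain w' where w': "w' \<in> carrier Z" "w \<otimes> w' = \<one>"
    using inverse_exists_if_residue_nonzero carrier(7) unit by blast
  define d where "d = D \<otimes> D \<ominus> a1 \<otimes> E \<otimes> D \<oplus> b1 \<otimes> E \<otimes> E"
  define s where "s = \<pi> [^] (N - m) \<otimes> (w' \<otimes> (\<ominus> D' \<otimes> r1' \<oplus> E' \<otimes> r0'))"
  define t where "t = \<pi> [^] (N - m) \<otimes> (w' \<otimes> ((a1 \<otimes> E' \<ominus> D') \<otimes> r0' \<ominus> b1 \<otimes> E' \<otimes> r1'))"
  have DE: "D \<in> carrier Z" "E \<in> carrier Z"
    using carrier D E by simp_all
  have st: "s \<in> carrier Z" "t \<in> carrier Z"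
    using carrier r' w' by (simp_all add: s_def t_def)
  have pi_pow: "\<pi> [^] (K + m) \<otimes> \<pi> [^] (N - m) = \<pi> [^] K \<otimes> \<pi> [^] N"
    using \<open>m \<le> N\<close> by (simp add: nat_pow_mult)
  have scale: "d \<otimes> (\<pi> [^] (N - m) \<otimes> (w' \<otimes> z)) = \<pi> [^] K \<otimes> (\<pi> [^] N \<otimes> z)"
    if "z \<in> carrier Z" for z
  proof -
    have "d \<otimes> (\<pi> [^] (N - m) \<otimes> (w' \<otimes> z)) = (\<pi> [^] (K + m) \<otimes> \<pi> [^] (N - m)) \<otimes> (w \<otimes> w') \<otimes> z"
      using that carrier w'(1) pi_pow_closed unfolding d_def res by algebra
    also have "\<dots> = \<pi> [^] K \<otimes> (\<pi> [^] N \<otimes> z)"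
      using that unfolding pi_pow w' by (simp add: m_assoc)
    finally show ?thesis .
  qed
  have ds: "d \<otimes> s = \<ominus> D \<otimes> r1 \<ominus> \<ominus> E \<otimes> r0"
  proof -
    have "d \<otimes> s = \<pi> [^] K \<otimes> (\<pi> [^] N \<otimes> (\<ominus> D' \<otimes> r1' \<oplus> E' \<otimes> r0'))"
      unfolding s_def using carrier r' by (simp add: scale)
    also have "\<dots> = \<ominus> D \<otimes> r1 \<ominus> \<ominus> E \<otimes> r0"
      unfolding D E r'(2,4) using carrier r' pi_pow_closed by algebra
    finally show ?thesis .
  qed
  have dt: "d \<otimes> t = (a1 \<otimes> E \<ominus> D) \<otimes> r0 \<ominus> b1 \<otimes> E \<otimes> r1"
  proof -
    have "d \<otimes> t = \<pi> [^] K \<otimes> (\<pi> [^] N \<otimes> ((a1 \<otimes> E' \<ominus> D') \<otimes> r0' \<ominus> b1 \<otimes> E' \<otimes> r1'))"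
      unfolding t_def using carrier r' by (simp add: scale)
    also have "\<dots> = (a1 \<otimes> E \<ominus> D) \<otimes> r0 \<ominus> b1 \<otimes> E \<otimes> r1"
      unfolding D E r'(2,4) using carrier r' pi_pow_closed by algebra
    finally show ?thesis .
  qed
  have cancel: "z = \<zero>" if "z \<in> carrier Z" "d \<otimes> z = \<zero>" for z
    using that(2) unfolding d_def res by (rule pi_pow_unit_mult_eq_zero[OF carrier(7) unit that(1)])
  have "d = (a1 \<otimes> E \<ominus> D) \<otimes> \<ominus> D \<ominus> \<ominus> E \<otimes> (b1 \<otimes> E)"
    unfolding d_def using carrier DE by algebra
  with carrier DE st have "(a1 \<otimes> E \<ominus> D) \<otimes> s \<oplus> \<ominus> E \<otimes> t = r1" "b1 \<otimes> E \<otimes> s \<oplus> \<ominus> D \<otimes> t = r0"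
    by (intro cramer_2x2[OF _ _ _ _ _ _ _ _ _ ds dt cancel]; simp)+
  moreover have "pdvd (N - m) s" "pdvd (N - m) t"
    unfolding s_def t_def by (fact pdvd_pi_pow_mult)+
  ultimately show ?thesis
    using st by blast
qed

lemma newton_step:
  assumes carrier: "a1 \<in> carrier Z" "b1 \<in> carrier Z" "a2 \<in> carrier Z" "b2 \<in> carrier Z"
    and c: "\<And>i. c i \<in> carrier Z"
    and D': "D' \<in> carrier Z" "b1 \<ominus> b2 = \<pi> [^] K \<otimes> D'"
    and E': "E' \<in> carrier Z" "a1 \<ominus> a2 = \<pi> [^] K \<otimes> E'"
    and res: "quad_resultant a1 b1 a2 b2 = \<pi> [^] (K + m) \<otimes> w" "w \<in> carrier Z" "w 1 \<noteq> 0"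
    and approx: "approx_quad_factor N c a1 b1 a2 b2" and N: "2 * m + 1 \<le> N"
  shows "\<exists>s1\<in>carrier Z. \<exists>t1\<in>carrier Z. \<exists>s2\<in>carrier Z. \<exists>t2\<in>carrier Z.
           pdvd (N - m) s1 \<and> pdvd (N - m) t1 \<and> pdvd (N - m) s2 \<and> pdvd (N - m) t2 \<and>
           approx_quad_factor (Suc N) c (a1 \<oplus> s1) (b1 \<oplus> t1) (a2 \<oplus> s2) (b2 \<oplus> t2)"
proof -
  define e0 e1 e2 e3
    where "e0 = c 0 \<ominus> b1 \<otimes> b2" and "e1 = c 1 \<ominus> (a1 \<otimes> b2 \<oplus> a2 \<otimes> b1)"
      and "e2 = c 2 \<ominus> (b1 \<oplus> b2 \<oplus> a1 \<otimes> a2)" and "e3 = c 3 \<ominus> (a1 \<oplus> a2)"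
  have e_closed: "e0 \<in> carrier Z" "e1 \<in> carrier Z" "e2 \<in> carrier Z" "e3 \<in> carrier Z"
    using carrier c by (simp_all add: e0_def e1_def e2_def e3_def)
  have e_pdvd: "pdvd N e0" "pdvd N e1" "pdvd N e2" "pdvd N e3"
    using approx unfolding approx_quad_factor_iff e0_def e1_def e2_def e3_def by simp_all
  define D E where "D = b1 \<ominus> b2" and "E = a1 \<ominus> a2"
  define r1 r0
    where "r1 = e1 \<ominus> b1 \<otimes> e3 \<ominus> a1 \<otimes> e2 \<oplus> a1 \<otimes> a1 \<otimes> e3" and "r0 = e0 \<ominus> b1 \<otimes> e2 \<oplus> a1 \<otimes> b1 \<otimes> e3"
  have r: "r1 \<in> carrier Z" "r0 \<in> carrier Z" "pdvd N r1" "pdvd N r0"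
    using carrier e_closed e_pdvd unfolding r1_def r0_def
    by (auto intro!: pdvd_add pdvd_minus pdvd_mult_right)
  have "D \<otimes> D \<ominus> a1 \<otimes> E \<otimes> D \<oplus> b1 \<otimes> E \<otimes> E = \<pi> [^] (K + m) \<otimes> w"
    using res(1) by (simp add: quad_resultant_def D_def E_def)
  then obtain s1 t1 where st: "s1 \<in> carrier Z" "t1 \<in> carrier Z" "pdvd (N - m) s1" "pdvd (N - m) t1"
      "(a1 \<otimes> E \<ominus> D) \<otimes> s1 \<oplus> \<ominus> E \<otimes> t1 = r1" "b1 \<otimes> E \<otimes> s1 \<oplus> \<ominus> D \<otimes> t1 = r0"
    using newton_linear_solve[of a1 b1 D' E' r1 r0 w D K E m N] carrier D' E' r res N
    by (auto simp: D_def E_def)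
  define s2 t2 where "s2 = e3 \<ominus> s1" and "t2 = e2 \<ominus> a1 \<otimes> e3 \<oplus> E \<otimes> s1 \<ominus> t1"
  have st2: "s2 \<in> carrier Z" "t2 \<in> carrier Z"
    using e_closed st carrier by (simp_all add: s2_def t2_def E_def)
  note new_coeffs = newton_correction_coeffs[OF carrier st(1,2) c c c c
      e0_def e1_def e2_def e3_def D_def E_def s2_def t2_def]
  have "pdvd (N - m) s2" "pdvd (N - m) t2"
    using e_pdvd(3,4) e_closed st carrier pdvd_mono[of _ "N - m" N]
    unfolding s2_def t2_def E_def by (auto intro!: pdvd_minus pdvd_add pdvd_mult_right)
  moreover have "Suc N \<le> (N - m) + (N - m)"
    using N by simp
  moreover have "x \<ominus> x \<ominus> y = \<ominus> y" if "x \<in> carrier Z" "y \<in> carrier Z" for x y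
    using that by algebra
  ultimately have "approx_quad_factor (Suc N) c (a1 \<oplus> s1) (b1 \<oplus> t1) (a2 \<oplus> s2) (b2 \<oplus> t2)"
    unfolding approx_quad_factor_iff new_coeffs r1_def[symmetric] r0_def[symmetric] st(5,6)
    using st st2 r
    by (auto intro!: pdvd_uminus pdvd_add pdvd_mult)
  with st st2 \<open>pdvd (N - m) s2\<close> \<open>pdvd (N - m) t2\<close> show ?thesis
    by blast
qed

lemma pdvd_near:
  assumes "x \<in> carrier Z" "x0 \<in> carrier Z" "pdvd K x0" "pdvd M (x \<ominus> x0)" "K \<le> M"
  shows "pdvd K x"
proof -
  have "x = x0 \<oplus> (x \<ominus> x0)"
    using assms by algebra
  with assms pdvd_mono[of "x \<ominus> x0" K M] show ?thesis
    by (metis pdvd_add minus_closed)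
qed

lemma pdvd_minus_near:
  assumes carrier: "x \<in> carrier Z" "y \<in> carrier Z" "x0 \<in> carrier Z" "y0 \<in> carrier Z"
    and "pdvd K (x0 \<ominus> y0)" "pdvd M (x \<ominus> x0)" "pdvd M (y \<ominus> y0)" "K \<le> M"
  shows "pdvd K (x \<ominus> y)"
proof (rule pdvd_near)
  have "(x \<ominus> y) \<ominus> (x0 \<ominus> y0) = (x \<ominus> x0) \<ominus> (y \<ominus> y0)"
    using carrier by algebra
  then show "pdvd M ((x \<ominus> y) \<ominus> (x0 \<ominus> y0))"
    using assms by (simp add: pdvd_minus)
qed (use assms in simp_all)

lemma pdvd_mult3_minus_near:
  assumes carrier: "c \<in> carrier Z" "x \<in> carrier Z" "y \<in> carrier Z"
      "c0 \<in> carrier Z" "x0 \<in> carrier Z" "y0 \<in> carrier Z"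
    and near: "pdvd M (c \<ominus> c0)" "pdvd M (x \<ominus> x0)" "pdvd M (y \<ominus> y0)"
    and small: "pdvd K x0" "pdvd K y0" and "K \<le> M"
  shows "pdvd (M + K) (c \<otimes> x \<otimes> y \<ominus> c0 \<otimes> x0 \<otimes> y0)"
proof -
  have "c \<otimes> x \<otimes> y \<ominus> c0 \<otimes> x0 \<otimes> y0 =
      (c \<ominus> c0) \<otimes> x \<otimes> y \<oplus> c0 \<otimes> ((x \<ominus> x0) \<otimes> y \<oplus> x0 \<otimes> (y \<ominus> y0))"
    using carrier by algebra
  moreover have "pdvd K x" "pdvd K y"
    using pdvd_near assms by blast+
  then have "pdvd (M + K) ((c \<ominus> c0) \<otimes> x \<otimes> y)" "pdvd (M + K) ((x \<ominus> x0) \<otimes> y)"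
    "pdvd (M + K) (x0 \<otimes> (y \<ominus> y0))"
    using carrier near small pdvd_mult[of "c \<ominus> c0" x M K "M + K"] pdvd_mult[of "x \<ominus> x0" y M K "M + K"]
      pdvd_mult[of x0 "y \<ominus> y0" K M "M + K"] by (simp_all add: pdvd_mult_left)
  ultimately show ?thesis
    by (simp add: pdvd_add pdvd_mult_right)
qed

lemma quad_resultant_near:
  assumes carrier0: "a10 \<in> carrier Z" "b10 \<in> carrier Z" "a20 \<in> carrier Z" "b20 \<in> carrier Z"
    and carrier: "a1 \<in> carrier Z" "b1 \<in> carrier Z" "a2 \<in> carrier Z" "b2 \<in> carrier Z"
    and D0: "pdvd K (b10 \<ominus> b20)" and E0: "pdvd K (a10 \<ominus> a20)"
    and near: "pdvd M (a1 \<ominus> a10)" "pdvd M (b1 \<ominus> b10)" "pdvd M (a2 \<ominus> a20)" "pdvd M (b2 \<ominus> b20)"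
    and "K \<le> M"
  shows "pdvd K (b1 \<ominus> b2)" "pdvd K (a1 \<ominus> a2)"
    "pdvd (M + K) (quad_resultant a1 b1 a2 b2 \<ominus> quad_resultant a10 b10 a20 b20)"
proof -
  define D E D0 E0 where "D = b1 \<ominus> b2" and "E = a1 \<ominus> a2" and "D0 = b10 \<ominus> b20" and "E0 = a10 \<ominus> a20"
  have closed: "D \<in> carrier Z" "E \<in> carrier Z" "D0 \<in> carrier Z" "E0 \<in> carrier Z"
    using carrier carrier0 by (simp_all add: D_def E_def D0_def E0_def)
  show "pdvd K (b1 \<ominus> b2)" "pdvd K (a1 \<ominus> a2)"
    using pdvd_minus_near carrier carrier0 assms by blast+
  have "pdvd M (D \<ominus> D0)" "pdvd M (E \<ominus> E0)"
  proof -
    have "D \<ominus> D0 = (b1 \<ominus> b10) \<ominus> (b2 \<ominus> b20)" "E \<ominus> E0 = (a1 \<ominus> a10) \<ominus> (a2 \<ominus> a20)"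
      using carrier carrier0 unfolding D_def D0_def E_def E0_def by algebra+
    then show "pdvd M (D \<ominus> D0)" "pdvd M (E \<ominus> E0)"
      using carrier carrier0 near by (simp_all add: pdvd_minus)
  qed
  moreover have "pdvd K D0" "pdvd K E0" "pdvd M (\<one> \<ominus> \<one>)"
    using D0 E0 by (simp_all add: D0_def E0_def a_minus_def r_neg)
  ultimately have "pdvd (M + K) (D \<otimes> D \<ominus> D0 \<otimes> D0)"
    "pdvd (M + K) (a1 \<otimes> E \<otimes> D \<ominus> a10 \<otimes> E0 \<otimes> D0)"
    "pdvd (M + K) (b1 \<otimes> E \<otimes> E \<ominus> b10 \<otimes> E0 \<otimes> E0)"
    using closed carrier carrier0 near \<open>K \<le> M\<close> pdvd_mult3_minus_near[of \<one> D D \<one> D0 D0 M K]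
    by (auto intro!: pdvd_mult3_minus_near)
  moreover have "quad_resultant a1 b1 a2 b2 \<ominus> quad_resultant a10 b10 a20 b20 =
      (D \<otimes> D \<ominus> D0 \<otimes> D0) \<ominus> (a1 \<otimes> E \<otimes> D \<ominus> a10 \<otimes> E0 \<otimes> D0)
        \<oplus> (b1 \<otimes> E \<otimes> E \<ominus> b10 \<otimes> E0 \<otimes> E0)"
  proof -
    have "quad_resultant a1 b1 a2 b2 = D \<otimes> D \<ominus> a1 \<otimes> E \<otimes> D \<oplus> b1 \<otimes> E \<otimes> E"
      "quad_resultant a10 b10 a20 b20 = D0 \<otimes> D0 \<ominus> a10 \<otimes> E0 \<otimes> D0 \<oplus> b10 \<otimes> E0 \<otimes> E0"
      by (simp_all add: quad_resultant_def D_def E_def D0_def E0_def)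
    then show ?thesis
      using closed carrier carrier0 by algebra
  qed
  ultimately show "pdvd (M + K) (quad_resultant a1 b1 a2 b2 \<ominus> quad_resultant a10 b10 a20 b20)"
    using closed carrier carrier0 by (simp add: pdvd_add pdvd_minus)
qed

lemma newton_step_near:
  assumes carrier0: "a10 \<in> carrier Z" "b10 \<in> carrier Z" "a20 \<in> carrier Z" "b20 \<in> carrier Z"
    and D0: "pdvd K (b10 \<ominus> b20)" and E0: "pdvd K (a10 \<ominus> a20)" and "K \<le> Suc m"
    and res0: "quad_resultant a10 b10 a20 b20 = \<pi> [^] (K + m) \<otimes> w0" "w0 \<in> carrier Z" "w0 1 \<noteq> 0"
    and carrier: "a1 \<in> carrier Z" "b1 \<in> carrier Z" "a2 \<in> carrier Z" "b2 \<in> carrier Z"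
    and near: "pdvd (Suc m) (a1 \<ominus> a10)" "pdvd (Suc m) (b1 \<ominus> b10)"
      "pdvd (Suc m) (a2 \<ominus> a20)" "pdvd (Suc m) (b2 \<ominus> b20)"
    and c: "\<And>i. c i \<in> carrier Z"
    and approx: "approx_quad_factor N c a1 b1 a2 b2" and N: "2 * m + 1 \<le> N"
  shows "\<exists>s1\<in>carrier Z. \<exists>t1\<in>carrier Z. \<exists>s2\<in>carrier Z. \<exists>t2\<in>carrier Z.
           pdvd (N - m) s1 \<and> pdvd (N - m) t1 \<and> pdvd (N - m) s2 \<and> pdvd (N - m) t2 \<and>
           approx_quad_factor (Suc N) c (a1 \<oplus> s1) (b1 \<oplus> t1) (a2 \<oplus> s2) (b2 \<oplus> t2)"
proof -
  note res_near = quad_resultant_near[OF carrier0 carrier D0 E0 near \<open>K \<le> Suc m\<close>]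
  obtain D' where D': "D' \<in> carrier Z" "b1 \<ominus> b2 = \<pi> [^] K \<otimes> D'"
    using pdvd_imp_pi_pow_factor[OF _ res_near(1)] carrier by auto
  obtain E' where E': "E' \<in> carrier Z" "a1 \<ominus> a2 = \<pi> [^] K \<otimes> E'"
    using pdvd_imp_pi_pow_factor[OF _ res_near(2)] carrier by auto
  obtain y where y: "y \<in> carrier Z"
    "quad_resultant a1 b1 a2 b2 \<ominus> quad_resultant a10 b10 a20 b20 = \<pi> [^] (Suc m + K) \<otimes> y"
    using pdvd_imp_pi_pow_factor[OF _ res_near(3)] carrier carrier0 by auto
  have "quad_resultant a1 b1 a2 b2 =
      quad_resultant a10 b10 a20 b20 \<oplus> (quad_resultant a1 b1 a2 b2 \<ominus> quad_resultant a10 b10 a20 b20)"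
    using quad_resultant_closed carrier carrier0 by algebra
  also have "\<dots> = \<pi> [^] (K + m) \<otimes> w0 \<oplus> \<pi> [^] (K + m) \<otimes> \<pi> \<otimes> y"
    unfolding y(2) unfolding res0(1) by (simp add: add.commute)
  also have "\<dots> = \<pi> [^] (K + m) \<otimes> (w0 \<oplus> \<pi> \<otimes> y)"
    using res0(2) y(1) pi_closed pi_pow_closed by algebra
  finally have res: "quad_resultant a1 b1 a2 b2 = \<pi> [^] (K + m) \<otimes> (w0 \<oplus> \<pi> \<otimes> y)" .
  have "(w0 \<oplus> \<pi> \<otimes> y) 1 \<noteq> 0"
    using residue_add_pi_mult res0(2,3) by simp
  with res show ?thesis
    using newton_step[OF carrier c D' E' _ _ _ approx N] res0(2) y(1) by simp
qed

lemma limit_exists: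
  assumes u: "\<And>j. u j \<in> carrier Z" and cauchy: "\<And>j. pdvd (Suc j) (u (Suc j) \<ominus> u j)"
  shows "\<exists>L\<in>carrier Z. \<forall>n. L n = u n n"
proof -
  have stable: "u j n = u n n" if "n \<le> j" for j n
    using that
  proof (induction j rule: dec_induct)
    case (step j)
    have "u (Suc j) n = u j n"
      using component_eq_if_pdvd_minus[OF u[of "Suc j"] u[of j] cauchy[of j]] step.hyps by simp
    with step.IH show ?case by simp
  qed simp
  have "(\<lambda>n. u n n) \<in> carrier Z"
    unfolding Z_def padic_int_carrier_iff
  proof (intro allI conjI)
    fix n
    show "0 \<le> u n n" "u n n < int p ^ n"
      using component_range[OF u[of n]] by auto
    have "u n n = u (Suc n) n"
      using stable[of n "Suc n"] by simp
    also have "\<dots> = u (Suc n) (Suc n) mod int p ^ n"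
      using component_mod[OF u[of "Suc n"], of n "Suc n"] by simp
    finally show "u n n = u (Suc n) (Suc n) mod int p ^ n" .
  qed
  then show ?thesis
    by (intro bexI[of _ "\<lambda>n. u n n"]) simp_all
qed

lemma minus_quad_prod_coeff_apply_cong:
  assumes "a1 \<in> carrier Z" "b1 \<in> carrier Z" "a2 \<in> carrier Z" "b2 \<in> carrier Z"
    "a1' \<in> carrier Z" "b1' \<in> carrier Z" "a2' \<in> carrier Z" "b2' \<in> carrier Z" "x \<in> carrier Z"
    and "a1 n = a1' n" "b1 n = b1' n" "a2 n = a2' n" "b2 n = b2' n"
  shows "(x \<ominus> quad_prod_coeff a1 b1 a2 b2 i) n = (x \<ominus> quad_prod_coeff a1' b1' a2' b2' i) n"
proof -
  have "quad_prod_coeff a1 b1 a2 b2 i n = quad_prod_coeff a1' b1' a2' b2' i n"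
    unfolding quad_prod_coeff_def using assms(10-13) by (simp add: add_apply mult_apply)
  then show ?thesis
    using assms(1-9) by (simp add: minus_apply)
qed

lemma approx_quad_factor_mono:
  assumes "m \<le> n" "approx_quad_factor n c a1 b1 a2 b2"
    "\<And>i. c i \<in> carrier Z" "a1 \<in> carrier Z" "b1 \<in> carrier Z" "a2 \<in> carrier Z" "b2 \<in> carrier Z"
  shows "approx_quad_factor m c a1 b1 a2 b2"
  using assms pdvd_mono unfolding approx_quad_factor_def by (meson minus_closed quad_prod_coeff_closed)

lemma exact_quad_factor_if_approx_sequence:
  assumes carrier: "\<And>n. A1 n \<in> carrier Z" "\<And>n. B1 n \<in> carrier Z" "\<And>n. A2 n \<in> carrier Z" "\<And>n. B2 n \<in> carrier Z"
    and c: "\<And>i. c i \<in> carrier Z"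
    and approx: "\<And>n. approx_quad_factor n c (A1 n) (B1 n) (A2 n) (B2 n)"
    and cauchy: "\<And>n. pdvd (Suc n) (A1 (Suc n) \<ominus> A1 n)" "\<And>n. pdvd (Suc n) (B1 (Suc n) \<ominus> B1 n)"
      "\<And>n. pdvd (Suc n) (A2 (Suc n) \<ominus> A2 n)" "\<And>n. pdvd (Suc n) (B2 (Suc n) \<ominus> B2 n)"
  shows "\<exists>a1\<in>carrier Z. \<exists>b1\<in>carrier Z. \<exists>a2\<in>carrier Z. \<exists>b2\<in>carrier Z.
           \<forall>i<4. c i = quad_prod_coeff a1 b1 a2 b2 i"
proof -
  obtain L1 L2 L3 L4 where L: "L1 \<in> carrier Z" "L2 \<in> carrier Z" "L3 \<in> carrier Z" "L4 \<in> carrier Z"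
    and L_apply: "\<And>n. L1 n = A1 n n" "\<And>n. L2 n = B1 n n" "\<And>n. L3 n = A2 n n" "\<And>n. L4 n = B2 n n"
    using limit_exists[of A1] limit_exists[of B1] limit_exists[of A2] limit_exists[of B2] carrier cauchy
    by metis
  have "c i = quad_prod_coeff L1 L2 L3 L4 i" if "i < 4" for i
  proof -
    have "pdvd n (c i \<ominus> quad_prod_coeff L1 L2 L3 L4 i)" for n
    proof -
      have "pdvd n (c i \<ominus> quad_prod_coeff (A1 n) (B1 n) (A2 n) (B2 n) i)"
        using approx[of n] that unfolding approx_quad_factor_def by blast
      then show ?thesis
        using minus_quad_prod_coeff_apply_cong[OF L carrier[of n] c L_apply[of n], of i]
        by (simp add: pdvd_def)
    qed
    then have "c i \<ominus> quad_prod_coeff L1 L2 L3 L4 i = \<zero>"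
      by (rule eq_zero_if_pdvd_all)
    then show ?thesis
      using L c by simp
  qed
  with L show ?thesis by blast
qed

lemma hensel_quad_factor:
  assumes carrier0: "a10 \<in> carrier Z" "b10 \<in> carrier Z" "a20 \<in> carrier Z" "b20 \<in> carrier Z"
    and D0: "pdvd K (b10 \<ominus> b20)" and E0: "pdvd K (a10 \<ominus> a20)" and "K \<le> Suc m"
    and res0: "quad_resultant a10 b10 a20 b20 = \<pi> [^] (K + m) \<otimes> w0" "w0 \<in> carrier Z" "w0 1 \<noteq> 0"
    and c: "\<And>i. c i \<in> carrier Z"
    and approx: "approx_quad_factor N0 c a10 b10 a20 b20" and N0: "2 * m + 1 \<le> N0"
  shows "\<exists>a1\<in>carrier Z. \<exists>b1\<in>carrier Z. \<exists>a2\<in>carrier Z. \<exists>b2\<in>carrier Z.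
           \<forall>i<4. c i = quad_prod_coeff a1 b1 a2 b2 i"
proof -
  define good where "good n v \<longleftrightarrow> (case v of (a1, b1, a2, b2) \<Rightarrow>
      a1 \<in> carrier Z \<and> b1 \<in> carrier Z \<and> a2 \<in> carrier Z \<and> b2 \<in> carrier Z \<and>
      pdvd (Suc m) (a1 \<ominus> a10) \<and> pdvd (Suc m) (b1 \<ominus> b10) \<and>
      pdvd (Suc m) (a2 \<ominus> a20) \<and> pdvd (Suc m) (b2 \<ominus> b20) \<and>
      approx_quad_factor (N0 + n) c a1 b1 a2 b2)" for n v
  define close where "close n v v' \<longleftrightarrow> (case (v, v') of ((a1, b1, a2, b2), (a1', b1', a2', b2')) \<Rightarrow>
      pdvd (Suc n) (a1' \<ominus> a1) \<and> pdvd (Suc n) (b1' \<ominus> b1) \<and>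
      pdvd (Suc n) (a2' \<ominus> a2) \<and> pdvd (Suc n) (b2' \<ominus> b2))" for n v v'
  have self_minus: "x \<ominus> x = \<zero>" if "x \<in> carrier Z" for x
    using that by (simp add: a_minus_def r_neg)
  have shift: "x \<oplus> s \<ominus> y = (x \<ominus> y) \<oplus> s" "x \<oplus> s \<ominus> x = s"
    if "x \<in> carrier Z" "y \<in> carrier Z" "s \<in> carrier Z" for x y s
    using that by algebra+
  have "good 0 (a10, b10, a20, b20)"
    using carrier0 approx by (simp add: good_def self_minus)
  moreover have "\<exists>v'. good (Suc n) v' \<and> close n v v'" if "good n v" for n v
  proof -
    obtain a1 b1 a2 b2 where v: "v = (a1, b1, a2, b2)"
      by (cases v) auto
    have carrier: "a1 \<in> carrier Z" "b1 \<in> carrier Z" "a2 \<in> carrier Z" "b2 \<in> carrier Z"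
      and near: "pdvd (Suc m) (a1 \<ominus> a10)" "pdvd (Suc m) (b1 \<ominus> b10)"
        "pdvd (Suc m) (a2 \<ominus> a20)" "pdvd (Suc m) (b2 \<ominus> b20)"
      and approx_n: "approx_quad_factor (N0 + n) c a1 b1 a2 b2"
      using that by (simp_all add: good_def v)
    have "2 * m + 1 \<le> N0 + n"
      using N0 by simp
    from newton_step_near[OF carrier0 D0 E0 \<open>K \<le> Suc m\<close> res0 carrier near c approx_n this]
    obtain s1 t1 s2 t2 where st: "s1 \<in> carrier Z" "t1 \<in> carrier Z" "s2 \<in> carrier Z" "t2 \<in> carrier Z"
      "pdvd (N0 + n - m) s1" "pdvd (N0 + n - m) t1" "pdvd (N0 + n - m) s2" "pdvd (N0 + n - m) t2"
      "approx_quad_factor (Suc (N0 + n)) c (a1 \<oplus> s1) (b1 \<oplus> t1) (a2 \<oplus> s2) (b2 \<oplus> t2)"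
      by blast
    have "Suc m \<le> N0 + n - m" "Suc n \<le> N0 + n - m"
      using N0 by simp_all
    then have "pdvd (Suc m) s1" "pdvd (Suc m) t1" "pdvd (Suc m) s2" "pdvd (Suc m) t2"
      "pdvd (Suc n) s1" "pdvd (Suc n) t1" "pdvd (Suc n) s2" "pdvd (Suc n) t2"
      using st pdvd_mono by blast+
    with st carrier carrier0 near
    have "good (Suc n) (a1 \<oplus> s1, b1 \<oplus> t1, a2 \<oplus> s2, b2 \<oplus> t2) \<and>
        close n v (a1 \<oplus> s1, b1 \<oplus> t1, a2 \<oplus> s2, b2 \<oplus> t2)"
      by (simp add: good_def close_def v shift self_minus pdvd_add)
    then show ?thesis by blast
  qed
  ultimately obtain f where f: "\<And>n. good n (f n) \<and> close n (f n) (f (Suc n))"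
    using dependent_nat_choice[of good close] by blast
  define A1 B1 A2 B2
    where "A1 n = fst (f n)" and "B1 n = fst (snd (f n))"
      and "A2 n = fst (snd (snd (f n)))" and "B2 n = snd (snd (snd (f n)))" for n
  have f_eq: "f n = (A1 n, B1 n, A2 n, B2 n)" for n
    by (simp add: A1_def B1_def A2_def B2_def)
  have "approx_quad_factor n c (A1 n) (B1 n) (A2 n) (B2 n)" for n
    using f[of n] approx_quad_factor_mono[of n "N0 + n"] c unfolding f_eq good_def by simp
  with f c show ?thesis
    unfolding f_eq good_def close_def by (intro exact_quad_factor_if_approx_sequence[of A1 B1 A2 B2 c]) simp_all
qed

lemma reducible_if_approx_quad_factor_near:
  assumes carrier0: "a10 \<in> carrier Z" "b10 \<in> carrier Z" "a20 \<in> carrier Z" "b20 \<in> carrier Z"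
    and D0: "pdvd K (b10 \<ominus> b20)" and E0: "pdvd K (a10 \<ominus> a20)" and "K \<le> Suc m"
    and res0: "quad_resultant a10 b10 a20 b20 = \<pi> [^] (K + m) \<otimes> w0" "w0 \<in> carrier Z" "w0 1 \<noteq> 0"
    and g: "g \<in> carrier (UP Z)" "deg Z g = 4" "up_ring.coeff (UP Z) g 4 = \<one>"
    and cong: "padic_poly_cong p N g (monic_quad Z a10 b10 \<otimes>\<^bsub>UP Z\<^esub> monic_quad Z a20 b20)"
    and N: "2 * m + 1 \<le> N"
  shows "padic_poly_reducible p g"
proof -
  interpret UP: UP_cring Z "UP Z"
    by (fact UP_cring_Z)
  have "approx_quad_factor N (up_ring.coeff (UP Z) g) a10 b10 a20 b20"
    unfolding approx_quad_factor_def
  proof (intro allI impI)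
    fix i
    have "\<pi> [^] N divides (up_ring.coeff (UP Z) g i \<ominus> quad_prod_coeff a10 b10 a20 b20 i)"
      using cong unfolding padic_poly_cong_def Z_def[symmetric] UP.coeff_monic_quad_mult[OF carrier0] by blast
    then show "pdvd N (up_ring.coeff (UP Z) g i \<ominus> quad_prod_coeff a10 b10 a20 b20 i)"
      using g(1) carrier0 by (simp add: pi_pow_divides_iff)
  qed
  from hensel_quad_factor[OF carrier0 D0 E0 \<open>K \<le> Suc m\<close> res0 _ this N]
  obtain a1 b1 a2 b2 where ab: "a1 \<in> carrier Z" "b1 \<in> carrier Z" "a2 \<in> carrier Z" "b2 \<in> carrier Z"
    and low: "\<forall>i<4. up_ring.coeff (UP Z) g i = quad_prod_coeff a1 b1 a2 b2 i"
    using g(1) by auto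
  have "g = monic_quad Z a1 b1 \<otimes>\<^bsub>UP Z\<^esub> monic_quad Z a2 b2"
    using UP.monic_quartic_eq_monic_quad_mult[OF g ab] low by blast
  moreover have "deg Z (monic_quad Z a1 b1) = 2" "deg Z (monic_quad Z a2 b2) = 2"
    using UP.deg_monic_quad ab one_neq_zero by simp_all
  ultimately show ?thesis
    unfolding padic_poly_reducible_def Z_def[symmetric] using ab UP.monic_quad_closed
    by (intro bexI[of _ "monic_quad Z a1 b1"] bexI[of _ "monic_quad Z a2 b2"]) simp_all
qed

section \<open>The quartic of the theorem\<close>

lemma reducible_if_near_scaled_opposite_factors:
  assumes carrier: "al \<in> carrier Z" "be \<in> carrier Z" "ga \<in> carrier Z"
    and small: "pdvd k al" "pdvd k (be \<ominus> ga)" and "k \<le> m"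
    and res0: "quad_resultant (\<pi> \<otimes> al) (\<pi> \<otimes> be) (\<ominus> (\<pi> \<otimes> al)) (\<pi> \<otimes> ga) = \<pi> [^] (Suc k + m) \<otimes> w0"
      "w0 \<in> carrier Z" "w0 1 \<noteq> 0"
    and g: "g \<in> carrier (UP Z)" "deg Z g = 4" "up_ring.coeff (UP Z) g 4 = \<one>"
    and cong: "padic_poly_cong p N g
      (monic_quad Z (\<pi> \<otimes> al) (\<pi> \<otimes> be) \<otimes>\<^bsub>UP Z\<^esub> monic_quad Z (\<ominus> (\<pi> \<otimes> al)) (\<pi> \<otimes> ga))"
    and N: "2 * m + 1 \<le> N"
  shows "padic_poly_reducible p g"
proof -
  have "\<pi> \<otimes> be \<ominus> \<pi> \<otimes> ga = \<pi> \<otimes> (be \<ominus> ga)" "\<pi> \<otimes> al \<ominus> \<ominus> (\<pi> \<otimes> al) = \<pi> \<otimes> (al \<oplus> al)"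
    using carrier pi_closed by algebra+
  moreover have "pdvd (Suc k) (\<pi> \<otimes> (be \<ominus> ga))" "pdvd (Suc k) (\<pi> \<otimes> (al \<oplus> al))"
    using pdvd_mult[OF pi_closed _ pdvd_one_pi, of _ k "Suc k"] carrier small pdvd_add[of k al al]
    by simp_all
  ultimately have "pdvd (Suc k) (\<pi> \<otimes> be \<ominus> \<pi> \<otimes> ga)" "pdvd (Suc k) (\<pi> \<otimes> al \<ominus> \<ominus> (\<pi> \<otimes> al))"
    by (simp_all only:)
  moreover have "Suc k \<le> Suc m"
    using \<open>k \<le> m\<close> by simp
  moreover have "\<pi> \<otimes> al \<in> carrier Z" "\<pi> \<otimes> be \<in> carrier Z" "\<ominus> (\<pi> \<otimes> al) \<in> carrier Z" "\<pi> \<otimes> ga \<in> carrier Z"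
    using carrier by simp_all
  ultimately show ?thesis
    using reducible_if_approx_quad_factor_near[OF _ _ _ _ _ _ _ res0 g cong N] by blast
qed

lemma reducible_if_difference_valuation_exact:
  assumes carrier: "al \<in> carrier Z" "be \<in> carrier Z" "ga \<in> carrier Z"
    and "\<pi> [^] k divides al" "\<pi> [^] k divides (be \<ominus> ga)" "\<not> \<pi> [^] (k + 1) divides (be \<ominus> ga)"
    and g: "g \<in> carrier (UP Z)" "deg Z g = 4" "up_ring.coeff (UP Z) g 4 = \<one>"
    and cong: "padic_poly_cong p (2 * k + 4) g
      (monic_quad Z (\<pi> \<otimes> al) (\<pi> \<otimes> be) \<otimes>\<^bsub>UP Z\<^esub> monic_quad Z (\<ominus> (\<pi> \<otimes> al)) (\<pi> \<otimes> ga))"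
  shows "padic_poly_reducible p g"
proof -
  obtain al' u where al': "al' \<in> carrier Z" "al = \<pi> [^] k \<otimes> al'"
    and u: "u \<in> carrier Z" "be \<ominus> ga = \<pi> [^] k \<otimes> u"
    using assms(4,5) unfolding factor_def by blast
  have "u 1 \<noteq> 0"
    using residue_nonzero_if_not_pi_pow_Suc_divides[OF u(1)] assms(6) u(2) by simp
  define two S where "two = \<one> \<oplus> \<one>" and "S = two \<otimes> be \<ominus> \<pi> [^] k \<otimes> u"
  define w0 where "w0 = u \<otimes> u \<oplus> \<pi> \<otimes> (two \<otimes> al' \<otimes> al' \<otimes> S)"
  have closed: "two \<in> carrier Z" "S \<in> carrier Z" "w0 \<in> carrier Z"
    using carrier al' u by (simp_all add: two_def S_def w0_def)
  have "quad_resultant (\<pi> \<otimes> al) (\<pi> \<otimes> be) (\<ominus> (\<pi> \<otimes> al)) (\<pi> \<otimes> ga) =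
      \<pi> \<otimes> \<pi> \<otimes> ((\<pi> [^] k \<otimes> u) \<otimes> (\<pi> [^] k \<otimes> u) \<oplus> two \<otimes> \<pi> \<otimes> (\<pi> [^] k \<otimes> al') \<otimes> (\<pi> [^] k \<otimes> al') \<otimes> S)"
    using quad_resultant_scaled_opposite[OF pi_closed carrier] unfolding two_def S_def u(2) al'(2) .
  also have "\<dots> = (\<pi> [^] k \<otimes> \<pi>) \<otimes> (\<pi> [^] k \<otimes> \<pi>) \<otimes> w0"
    unfolding w0_def using al' u closed pi_closed pi_pow_closed[of k] by algebra
  also have "\<dots> = \<pi> [^] (Suc k + Suc k) \<otimes> w0"
    using closed by (simp add: nat_pow_mult[symmetric] m_ac)
  finally have res0: "quad_resultant (\<pi> \<otimes> al) (\<pi> \<otimes> be) (\<ominus> (\<pi> \<otimes> al)) (\<pi> \<otimes> ga) =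
      \<pi> [^] (Suc k + Suc k) \<otimes> w0" .
  have "w0 1 \<noteq> 0"
    unfolding w0_def using residue_add_pi_mult residue_mult_nonzero u \<open>u 1 \<noteq> 0\<close> by simp
  moreover have "pdvd k al" "pdvd k (be \<ominus> ga)"
    unfolding al'(2) u(2) by (fact pdvd_pi_pow_mult)+
  ultimately show ?thesis
    using reducible_if_near_scaled_opposite_factors[OF carrier _ _ _ res0 closed(3) _ g cong] by simp
qed

lemma reducible_if_alpha_valuation_exact:
  assumes carrier: "al \<in> carrier Z" "be \<in> carrier Z" "ga \<in> carrier Z" and "odd p"
    and "\<not> \<pi> divides be" and "\<pi> [^] k divides al" "\<not> \<pi> [^] (k + 1) divides al"
    and "\<pi> [^] (k + 1) divides (be \<ominus> ga)"
    and g: "g \<in> carrier (UP Z)" "deg Z g = 4" "up_ring.coeff (UP Z) g 4 = \<one>"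
    and cong: "padic_poly_cong p (2 * k + 5) g
      (monic_quad Z (\<pi> \<otimes> al) (\<pi> \<otimes> be) \<otimes>\<^bsub>UP Z\<^esub> monic_quad Z (\<ominus> (\<pi> \<otimes> al)) (\<pi> \<otimes> ga))"
  shows "padic_poly_reducible p g"
proof -
  obtain al' v where al': "al' \<in> carrier Z" "al = \<pi> [^] k \<otimes> al'"
    and v: "v \<in> carrier Z" "be \<ominus> ga = \<pi> [^] k \<otimes> \<pi> \<otimes> v"
    using assms(6,8) unfolding factor_def by (auto simp: m_assoc)
  have "al' 1 \<noteq> 0"
    using residue_nonzero_if_not_pi_pow_Suc_divides[OF al'(1)] assms(7) al'(2) by simp
  have "be 1 \<noteq> 0"
    using residue_nonzero_iff_not_pi_divides carrier assms(5) by simp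
  define two S where "two = \<one> \<oplus> \<one>" and "S = two \<otimes> be \<ominus> \<pi> [^] k \<otimes> \<pi> \<otimes> v"
  define w0 where "w0 = two \<otimes> two \<otimes> al' \<otimes> al' \<otimes> be \<oplus> \<pi> \<otimes> (v \<otimes> v \<ominus> two \<otimes> al' \<otimes> al' \<otimes> \<pi> [^] k \<otimes> v)"
  have closed: "two \<in> carrier Z" "S \<in> carrier Z" "w0 \<in> carrier Z"
    using carrier al' v by (simp_all add: two_def S_def w0_def)
  have "quad_resultant (\<pi> \<otimes> al) (\<pi> \<otimes> be) (\<ominus> (\<pi> \<otimes> al)) (\<pi> \<otimes> ga) =
      \<pi> \<otimes> \<pi> \<otimes> ((\<pi> [^] k \<otimes> \<pi> \<otimes> v) \<otimes> (\<pi> [^] k \<otimes> \<pi> \<otimes> v) \<oplus> two \<otimes> \<pi> \<otimes> (\<pi> [^] k \<otimes> al')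
        \<otimes> (\<pi> [^] k \<otimes> al') \<otimes> S)"
    using quad_resultant_scaled_opposite[OF pi_closed carrier] unfolding two_def S_def v(2) al'(2) .
  also have "\<dots> = (\<pi> [^] k \<otimes> \<pi>) \<otimes> (\<pi> [^] k \<otimes> \<pi> \<otimes> \<pi>) \<otimes> (\<pi> \<otimes> v \<otimes> v \<oplus> two \<otimes> al' \<otimes> al' \<otimes> S)"
    using al' v closed pi_closed pi_pow_closed[of k] by algebra
  also have "\<pi> \<otimes> v \<otimes> v \<oplus> two \<otimes> al' \<otimes> al' \<otimes> S = w0"
    unfolding w0_def S_def using carrier al' v closed(1) pi_closed pi_pow_closed[of k] by algebra
  also have "(\<pi> [^] k \<otimes> \<pi>) \<otimes> (\<pi> [^] k \<otimes> \<pi> \<otimes> \<pi>) \<otimes> w0 = \<pi> [^] (Suc k + Suc (Suc k)) \<otimes> w0"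
    using closed by (simp add: nat_pow_mult[symmetric] m_ac)
  finally have res0: "quad_resultant (\<pi> \<otimes> al) (\<pi> \<otimes> be) (\<ominus> (\<pi> \<otimes> al)) (\<pi> \<otimes> ga) =
      \<pi> [^] (Suc k + Suc (Suc k)) \<otimes> w0" .
  have "(two \<otimes> two \<otimes> al' \<otimes> al' \<otimes> be) 1 \<noteq> 0"
    using residue_two_nonzero[OF \<open>odd p\<close>] \<open>al' 1 \<noteq> 0\<close> \<open>be 1 \<noteq> 0\<close> carrier al' closed
    unfolding two_def[symmetric] by (intro residue_mult_nonzero) simp_all
  then have "w0 1 \<noteq> 0"
    unfolding w0_def using residue_add_pi_mult carrier al' closed by simp
  moreover have "pdvd k al" "pdvd k (be \<ominus> ga)"
    unfolding al'(2) v(2) using pdvd_pi_pow_mult v(1) by (simp_all add: m_assoc)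
  ultimately show ?thesis
    using reducible_if_near_scaled_opposite_factors[OF carrier _ _ _ res0 closed(3) _ g cong] by simp
qed

end

theorem claim3:
  fixes p k :: nat and \<alpha> \<beta> \<gamma> :: "nat \<Rightarrow> int"
  defines "Zp \<equiv> padic_int p"
  defines "P \<equiv> UP (padic_int p)"
  defines "pp \<equiv> padic_p p"
  defines "Xv \<equiv> monom (UP (padic_int p)) \<one>\<^bsub>padic_int p\<^esub> 1"
  defines "f \<equiv> (Xv [^]\<^bsub>P\<^esub> (2::nat) \<oplus>\<^bsub>P\<^esub> monom P (pp \<otimes>\<^bsub>Zp\<^esub> \<alpha>) 1 \<oplus>\<^bsub>P\<^esub> monom P (pp \<otimes>\<^bsub>Zp\<^esub> \<beta>) 0)
              \<otimes>\<^bsub>P\<^esub> (Xv [^]\<^bsub>P\<^esub> (2::nat) \<ominus>\<^bsub>P\<^esub> monom P (pp \<otimes>\<^bsub>Zp\<^esub> \<alpha>) 1 \<oplus>\<^bsub>P\<^esub> monom P (pp \<otimes>\<^bsub>Zp\<^esub> \<gamma>) 0)"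
  assumes "Factorial_Ring.prime p" and "odd p"
    and "\<alpha> \<in> carrier Zp" and "\<beta> \<in> carrier Zp" and "\<gamma> \<in> carrier Zp"
    and "\<not> pp divides\<^bsub>Zp\<^esub> \<beta>" and "\<not> pp divides\<^bsub>Zp\<^esub> \<gamma>"
    and "(\<alpha>, \<beta> \<ominus>\<^bsub>Zp\<^esub> \<gamma>) \<noteq> (\<zero>\<^bsub>Zp\<^esub>, \<zero>\<^bsub>Zp\<^esub>)"
    and "(pp [^]\<^bsub>Zp\<^esub> k) divides\<^bsub>Zp\<^esub> \<alpha>" and "(pp [^]\<^bsub>Zp\<^esub> k) divides\<^bsub>Zp\<^esub> (\<beta> \<ominus>\<^bsub>Zp\<^esub> \<gamma>)"
    and "\<forall>j. (pp [^]\<^bsub>Zp\<^esub> j) divides\<^bsub>Zp\<^esub> \<alpha> \<and> (pp [^]\<^bsub>Zp\<^esub> j) divides\<^bsub>Zp\<^esub> (\<beta> \<ominus>\<^bsub>Zp\<^esub> \<gamma>) \<longrightarrow> j \<le> k"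
  shows "(\<not> (pp [^]\<^bsub>Zp\<^esub> (k+1)) divides\<^bsub>Zp\<^esub> (\<beta> \<ominus>\<^bsub>Zp\<^esub> \<gamma>) \<longrightarrow>
           (\<forall>g\<in>carrier P. deg Zp g = 4 \<and> coeff P g 4 = \<one>\<^bsub>Zp\<^esub> \<and> padic_poly_cong p (2*k+4) g f
              \<longrightarrow> padic_poly_reducible p g))
       \<and> ((pp [^]\<^bsub>Zp\<^esub> (k+1)) divides\<^bsub>Zp\<^esub> (\<beta> \<ominus>\<^bsub>Zp\<^esub> \<gamma>) \<and> \<not> (pp [^]\<^bsub>Zp\<^esub> (k+1)) divides\<^bsub>Zp\<^esub> \<alpha> \<longrightarrow>
           (\<forall>g\<in>carrier P. deg Zp g = 4 \<and> coeff P g 4 = \<one>\<^bsub>Zp\<^esub> \<and> padic_poly_cong p (2*k+5) g f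
              \<longrightarrow> padic_poly_reducible p g))"
proof -
  interpret padic_integers p "padic_int p"
    using assms(6) by unfold_locales
  interpret UP: UP_cring "padic_int p" "UP (padic_int p)"
    by (fact UP_cring_Z)
  have carrier: "\<alpha> \<in> carrier Zp" "\<beta> \<in> carrier Zp" "\<gamma> \<in> carrier Zp"
    using assms(8-10) .
  then have "pp \<otimes>\<^bsub>Zp\<^esub> \<alpha> \<in> carrier Zp" "pp \<otimes>\<^bsub>Zp\<^esub> \<beta> \<in> carrier Zp" "pp \<otimes>\<^bsub>Zp\<^esub> \<gamma> \<in> carrier Zp"
    unfolding Zp_def pp_def by simp_all
  then have f: "f = monic_quad Zp (pp \<otimes>\<^bsub>Zp\<^esub> \<alpha>) (pp \<otimes>\<^bsub>Zp\<^esub> \<beta>) \<otimes>\<^bsub>P\<^esub> monic_quad Zp (\<ominus>\<^bsub>Zp\<^esub> (pp \<otimes>\<^bsub>Zp\<^esub> \<alpha>)) (pp \<otimes>\<^bsub>Zp\<^esub> \<gamma>)"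
    unfolding f_def Xv_def P_def Zp_def pp_def
    by (simp only: UP.monic_quad_eq_plus UP.monic_quad_eq_minus)
  show ?thesis
  proof (intro conjI impI ballI)
    fix g
    assume "\<not> pp [^]\<^bsub>Zp\<^esub> (k + 1) divides\<^bsub>Zp\<^esub> (\<beta> \<ominus>\<^bsub>Zp\<^esub> \<gamma>)" "g \<in> carrier P"
      "deg Zp g = 4 \<and> up_ring.coeff P g 4 = \<one>\<^bsub>Zp\<^esub> \<and> padic_poly_cong p (2 * k + 4) g f"
    then show "padic_poly_reducible p g"
      using reducible_if_difference_valuation_exact[OF carrier[unfolded Zp_def]] assms(14,15)
      unfolding f Zp_def P_def pp_def by blast
  next
    fix g
    assume "pp [^]\<^bsub>Zp\<^esub> (k + 1) divides\<^bsub>Zp\<^esub> (\<beta> \<ominus>\<^bsub>Zp\<^esub> \<gamma>) \<and> \<not> pp [^]\<^bsub>Zp\<^esub> (k + 1) divides\<^bsub>Zp\<^esub> \<alpha>"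
      "g \<in> carrier P" "deg Zp g = 4 \<and> up_ring.coeff P g 4 = \<one>\<^bsub>Zp\<^esub> \<and> padic_poly_cong p (2 * k + 5) g f"
    then show "padic_poly_reducible p g"
      using reducible_if_alpha_valuation_exact[OF carrier[unfolded Zp_def] assms(7)] assms(11,14)
      unfolding f Zp_def P_def pp_def by blast
  qed
qed

end
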